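(* Let $q=AB$ be a two-atom query over $R$ with $A=R(\bar x)$, $B=R(\bar y)$, satisfying the standing assumption below, and let $\mathrm{sjf}(q) = R_1(\bar x)\wedge R_2(\bar y)$. There is a polynomial-time reduction from $\mathrm{certain}(\mathrm{sjf}(q))$ to $\mathrm{certain}(q)$.
   Context: $R$ is a relation symbol of arity $k\ge 1$ whose first $l$ positions form its primary key; $R_1,R_2$ are two distinct relation symbols of the same arity $k$ and with the same first $l$ key positions. Facts are $S(\bar a)$ ($S$ a relation symbol, $\bar a$ a tuple of elements), atoms are $S(\bar x)$ with $\bar x$ a tuple of variables. The key tuple $\overline{\mathrm{key}}(t)$ of a term is the tuple of its first $l$ entries. Two facts are key-equal if they use the same relation symbol and have equal key tuples. A database is a finite set of facts; a block is a maximal set of pairwise key-equal facts; a repair is a $\subseteq$-maximal subset with no two distinct key-equal facts. A two-atom query $q=AB$ denotes $\exists\bar y (A\wedge B)$, satisfied by $D$ if some mapping $\mu$ from variables to elements has $\mu(A),\mu(B)\in D$. For a fixed query $p$, $\mathrm{certain}(p)$ is the problem: given a database $D$, decide whether every repair of $D$ satisfies $p$. Standing assumption: $\overline{\mathrm{key}}(A)\neq\overline{\mathrm{key}}(B)$ and $q$ is not equivalent, over all consistent databases (databases that are their own repair), to a query consisting of a single atom. *)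

theory Defs
  imports Main
begin

text \<open>Elements are natural numbers, relation symbols are natural numbers.
  A fact S(a) is a pair (S, a). All relation symbols considered have arity k and
  their first l positions form the primary key.\<close>

type_synonym fact = "nat \<times> nat list"

definition relR :: nat where "relR = 0"
definition relR1 :: nat where "relR1 = 1"
definition relR2 :: nat where "relR2 = 2"

definition key_tuple :: "nat \<Rightarrow> fact \<Rightarrow> nat list" where
  "key_tuple l f = take l (snd f)"

definition key_equal :: "nat \<Rightarrow> fact \<Rightarrow> fact \<Rightarrow> bool" where
  "key_equal l f g \<longleftrightarrow> fst f = fst g \<and> key_tuple l f = key_tuple l g"

definition db_over :: "nat set \<Rightarrow> nat \<Rightarrow> fact set \<Rightarrow> bool" where
  "db_over Ss k D \<longleftrightarrow> finite D \<and> (\<forall>f\<in>D. fst f \<in> Ss \<and> length (snd f) = k)"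

definition consistent :: "nat \<Rightarrow> fact set \<Rightarrow> bool" where
  "consistent l D \<longleftrightarrow> (\<forall>f\<in>D. \<forall>g\<in>D. key_equal l f g \<longrightarrow> f = g)"

definition is_repair :: "nat \<Rightarrow> fact set \<Rightarrow> fact set \<Rightarrow> bool" where
  "is_repair l D r \<longleftrightarrow> r \<subseteq> D \<and> consistent l r \<and>
     (\<forall>r'. r \<subseteq> r' \<longrightarrow> r' \<subseteq> D \<longrightarrow> consistent l r' \<longrightarrow> r' = r)"

definition certain :: "nat \<Rightarrow> (fact set \<Rightarrow> bool) \<Rightarrow> fact set \<Rightarrow> bool" where
  "certain l P D \<longleftrightarrow> (\<forall>r. is_repair l D r \<longrightarrow> P r)"

text \<open>Satisfaction of the two-atom query S1(xs) /\ S2(ys) (variables are nats,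
  all variables existentially quantified), and of a single-atom query S(zs).\<close>
definition sat2 :: "nat \<times> nat list \<Rightarrow> nat \<times> nat list \<Rightarrow> fact set \<Rightarrow> bool" where
  "sat2 A B D \<longleftrightarrow> (\<exists>\<mu>::nat \<Rightarrow> nat. (fst A, map \<mu> (snd A)) \<in> D \<and> (fst B, map \<mu> (snd B)) \<in> D)"

definition sat1 :: "nat \<times> nat list \<Rightarrow> fact set \<Rightarrow> bool" where
  "sat1 C D \<longleftrightarrow> (\<exists>\<mu>::nat \<Rightarrow> nat. (fst C, map \<mu> (snd C)) \<in> D)"

definition standing_assumption :: "nat \<Rightarrow> nat \<Rightarrow> nat list \<Rightarrow> nat list \<Rightarrow> bool" where
  "standing_assumption k l xs ys \<longleftrightarrow>
     take l xs \<noteq> take l ys \<and>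
     \<not> (\<exists>zs. length zs = k \<and>
          (\<forall>D. db_over {relR} k D \<and> consistent l D \<longrightarrow>
               (sat2 (relR, xs) (relR, ys) D \<longleftrightarrow> sat1 (relR, zs) D)))"

text \<open>Alphabet {1,2,3,4}: 1 = bit 0, 2 = bit 1, 3 = end of number, 4 = end of fact.\<close>

fun bin :: "nat \<Rightarrow> nat list" where
  "bin n = (if n = 0 then [] else bin (n div 2) @ [n mod 2 + 1])"

definition enc_nat :: "nat \<Rightarrow> nat list" where
  "enc_nat n = bin n @ [3]"

definition enc_fact :: "fact \<Rightarrow> nat list" where
  "enc_fact f = enc_nat (fst f) @ concat (map enc_nat (snd f)) @ [4]"

definition enc_db :: "fact list \<Rightarrow> nat list" where
  "enc_db fs = concat (map enc_fact fs)"

definition certain_lang :: "nat set \<Rightarrow> nat \<Rightarrow> nat \<Rightarrow> (fact set \<Rightarrow> bool) \<Rightarrow> nat list set" where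
  "certain_lang Ss k l P = {w. \<exists>fs. distinct fs \<and> w = enc_db fs \<and>
       db_over Ss k (set fs) \<and> certain l P (set fs)}"

datatype move = MLeft | MRight

text \<open>States 0..<n_states (0 = halting state, 1 = start state), tape symbols
  0..<n_syms (0 = blank).\<close>
record tm =
  n_states :: nat
  n_syms :: nat
  delta :: "nat \<Rightarrow> nat \<Rightarrow> nat \<times> nat \<times> move"

definition wf_tm :: "tm \<Rightarrow> bool" where
  "wf_tm M \<longleftrightarrow> 2 \<le> n_states M \<and> 5 \<le> n_syms M \<and>
     (\<forall>q s. 0 < q \<longrightarrow> q < n_states M \<longrightarrow> s < n_syms M \<longrightarrow>
        fst (delta M q s) < n_states M \<and> fst (snd (delta M q s)) < n_syms M)"

text \<open>Configuration: (state, tape left of head reversed, tape from head on).\<close>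
type_synonym config = "nat \<times> nat list \<times> nat list"

definition tm_step :: "tm \<Rightarrow> config \<Rightarrow> config" where
  "tm_step M c = (case c of (q, ls, rs) \<Rightarrow>
     (if q = 0 then (q, ls, rs) else
      (let s = (case rs of [] \<Rightarrow> 0 | x # _ \<Rightarrow> x);
           (q', s', m) = delta M q s
       in (case m of
             MRight \<Rightarrow> (q', s' # ls, tl rs)
           | MLeft \<Rightarrow> (case ls of
                         [] \<Rightarrow> (q', [], s' # tl rs)
                       | y # ls' \<Rightarrow> (q', ls', y # s' # tl rs))))))"

definition tm_run :: "tm \<Rightarrow> nat \<Rightarrow> config \<Rightarrow> config" where
  "tm_run M t c = (tm_step M ^^ t) c"

definition tm_init :: "nat list \<Rightarrow> config" where
  "tm_init w = (1, [], w)"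

definition tm_output :: "config \<Rightarrow> nat list" where
  "tm_output c = (case c of (q, ls, rs) \<Rightarrow> takeWhile (\<lambda>s. s \<noteq> 0) (rev ls @ rs))"

definition poly_time_computable :: "(nat list \<Rightarrow> nat list) \<Rightarrow> bool" where
  "poly_time_computable f \<longleftrightarrow>
     (\<exists>M c d. wf_tm M \<and>
        (\<forall>w. set w \<subseteq> {1,2,3,4} \<longrightarrow>
           (\<exists>t. t \<le> c * (length w + 1) ^ d \<and>
                fst (tm_run M t (tm_init w)) = 0 \<and>
                tm_output (tm_run M t (tm_init w)) = f w)))"

definition poly_reduces :: "nat list set \<Rightarrow> nat list set \<Rightarrow> bool" where
  "poly_reduces L1 L2 \<longleftrightarrow>
     (\<exists>f. poly_time_computable f \<and>
        (\<forall>w. set w \<subseteq> {1,2,3,4} \<longrightarrow> (w \<in> L1 \<longleftrightarrow> f w \<in> L2)))"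

end

theory Submission
  imports Defs "HOL-Library.Countable"
begin

text \<open>A fact \<open>R\<^sub>1(a\<^sub>1, ..., a\<^sub>k)\<close> is mapped to \<open>R(\<langle>a\<^sub>1, x\<^sub>1\<rangle>, ..., \<langle>a\<^sub>k, x\<^sub>k\<rangle>)\<close> and a fact
  \<open>R\<^sub>2(b\<^sub>1, ..., b\<^sub>k)\<close> to \<open>R(\<langle>b\<^sub>1, y\<^sub>1\<rangle>, ..., \<langle>b\<^sub>k, y\<^sub>k\<rangle>)\<close>, for an injective pairing
  \<open>\<langle>_, _\<rangle>\<close> of numbers. As the key tuples of \<open>x\<close> and \<open>y\<close> differ, the map preserves and
  reflects key-equality, so repairs of a database correspond to repairs of its image. A
  valuation satisfying \<open>q\<close> in the image of a repair is decoded componentwise; if both atoms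
  of \<open>q\<close> were matched by images of facts over the same relation symbol, the decoded
  variable map would fold \<open>q\<close> onto one of its atoms, contradicting the standing assumption.
  So the two matched facts are an \<open>R\<^sub>1\<close>-fact and an \<open>R\<^sub>2\<close>-fact and witness \<open>sjf(q)\<close>.
  On encodings the map is computed by a finite-state transducer that writes a fixed-length
  tag of the variable in front of every entry, and a single-tape Turing machine simulates
  any such transducer in quadratic time.\<close>

declare bin.simps [simp del]

lemma bin_0 [simp]: "bin 0 = []"
  by (simp add: bin.simps)

lemma bin_pos: "0 < n \<Longrightarrow> bin n = bin (n div 2) @ [n mod 2 + 1]"
  by (subst bin.simps) simp

lemma set_bin: "set (bin n) \<subseteq> {1, 2}"
proof (induction n rule: bin.induct)
  case (1 n)
  have "n mod 2 = 0 \<or> n mod 2 = 1" by arith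
  with 1 show ?case by (cases "n = 0") (auto simp: bin_pos[of n])
qed

lemma bin_pos_Cons: "0 < n \<Longrightarrow> \<exists>bs. bin n = 2 # bs"
proof (induction n rule: bin.induct)
  case (1 n)
  show ?case
  proof (cases "n div 2 = 0")
    case True
    with "1.prems" have "n = 1" by auto
    then show ?thesis by (simp add: bin_pos[of "Suc 0"])
  next
    case False
    with 1 show ?thesis by (auto simp: bin_pos[of n])
  qed
qed

definition nat_of_bits :: "nat list \<Rightarrow> nat" where
  "nat_of_bits bs = foldl (\<lambda>n b. 2 * n + (b - 1)) 0 bs"

lemma nat_of_bits_Nil [simp]: "nat_of_bits [] = 0"
  by (simp add: nat_of_bits_def)

lemma nat_of_bits_snoc [simp]: "nat_of_bits (bs @ [b]) = 2 * nat_of_bits bs + (b - 1)"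
  by (simp add: nat_of_bits_def)

lemma nat_of_bits_bin [simp]: "nat_of_bits (bin n) = n"
proof (induction n rule: bin.induct)
  case (1 n)
  then show ?case by (cases "n = 0") (simp_all add: bin_pos[of n])
qed

lemma bin_inject: "bin a = bin b \<longleftrightarrow> a = b"
  by (metis nat_of_bits_bin)

definition canonical_bits :: "nat list \<Rightarrow> bool" where
  "canonical_bits bs \<longleftrightarrow> set bs \<subseteq> {1, 2} \<and> (bs \<noteq> [] \<longrightarrow> hd bs = 2)"

lemma bin_nat_of_bits: "canonical_bits bs \<Longrightarrow> bin (nat_of_bits bs) = bs"
proof (induction bs rule: rev_induct)
  case (snoc b bs)
  then have b: "b \<in> {1, 2}" by (simp add: canonical_bits_def)
  show ?case
  proof (cases "bs = []")
    case True
    with snoc.prems have "bs @ [b] = [2]" by (simp add: canonical_bits_def)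
    then show ?thesis using nat_of_bits_snoc[of "[]" 2] by (simp add: bin_pos[of "Suc 0"])
  next
    case False
    with snoc have IH: "bin (nat_of_bits bs) = bs" by (simp add: canonical_bits_def)
    with False have "0 < nat_of_bits bs" by (cases "nat_of_bits bs") auto
    have "bin (2 * nat_of_bits bs + (b - 1)) = bin (nat_of_bits bs) @ [b]"
      using b bin_pos[of "2 * nat_of_bits bs + (b - 1)"] \<open>0 < nat_of_bits bs\<close> by auto
    with IH show ?thesis by simp
  qed
qed (simp add: canonical_bits_def)

fun fixed_bits :: "nat \<Rightarrow> nat \<Rightarrow> nat list" where
  "fixed_bits 0 v = []"
| "fixed_bits (Suc m) v = fixed_bits m (v div 2) @ [v mod 2 + 1]"

lemma length_fixed_bits [simp]: "length (fixed_bits m v) = m"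
  by (induction m arbitrary: v) auto

lemma set_fixed_bits: "set (fixed_bits m v) \<subseteq> {1, 2}"
proof (induction m arbitrary: v)
  case (Suc m)
  have "v mod 2 = 0 \<or> v mod 2 = 1" by arith
  with Suc show ?case by auto
qed simp

lemma nat_of_bits_fixed_bits: "nat_of_bits (fixed_bits m v) = v mod 2 ^ m"
proof (induction m arbitrary: v)
  case (Suc m)
  have "v mod 2 ^ Suc m = 2 * (v div 2 mod 2 ^ m) + v mod 2"
    by (simp add: mod_mult2_eq mult.commute)
  with Suc show ?case by simp
qed simp

text \<open>The binary representation of \<open>pair_code m a v\<close> is that of \<open>a\<close> preceded by
  the tag of \<open>v\<close>, a word of fixed length \<open>m + 1\<close> whose leading \<open>2\<close> (bit one) keeps
  the representation canonical; so a transducer produces it while copying \<open>a\<close>.\<close>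

definition tag :: "nat \<Rightarrow> nat \<Rightarrow> nat list" where
  "tag m v = 2 # fixed_bits m v"

definition pair_code :: "nat \<Rightarrow> nat \<Rightarrow> nat \<Rightarrow> nat" where
  "pair_code m a v = nat_of_bits (tag m v @ bin a)"

lemma bin_pair_code: "bin (pair_code m a v) = tag m v @ bin a"
  unfolding pair_code_def
  by (rule bin_nat_of_bits)
    (use set_bin set_fixed_bits in \<open>auto simp: canonical_bits_def tag_def\<close>)

definition code_fst :: "nat \<Rightarrow> nat \<Rightarrow> nat" where
  "code_fst m z = nat_of_bits (drop (Suc m) (bin z))"

definition code_snd :: "nat \<Rightarrow> nat \<Rightarrow> nat" where
  "code_snd m z = nat_of_bits (take m (tl (bin z)))"

lemma code_fst_pair_code [simp]: "code_fst m (pair_code m a v) = a"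
  by (simp add: code_fst_def bin_pair_code tag_def)

lemma code_snd_pair_code [simp]: "v < 2 ^ m \<Longrightarrow> code_snd m (pair_code m a v) = v"
  by (simp add: code_snd_def bin_pair_code tag_def nat_of_bits_fixed_bits)

lemma map_code_fst_map2_pair_code:
  "length as = length vs \<Longrightarrow> map (code_fst m) (map2 (pair_code m) as vs) = as"
  by (induction as vs rule: list_induct2) auto

lemma map_code_snd_map2_pair_code:
  "length as = length vs \<Longrightarrow> \<forall>v\<in>set vs. v < 2 ^ m \<Longrightarrow>
    map (code_snd m) (map2 (pair_code m) as vs) = vs"
  by (induction as vs rule: list_induct2) auto

lemma enc_nat_0 [simp]: "enc_nat 0 = [3]"
  by (simp add: enc_nat_def)

lemma enc_nat_pair_code: "enc_nat (pair_code m a v) = tag m v @ bin a @ [3]"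
  by (simp add: enc_nat_def bin_pair_code)

lemma concat_map_inject_prefix_code:
  assumes prefix_code: "\<And>a b u u'. f a @ u = f b @ u' \<Longrightarrow> a = b \<and> u = u'"
    and nonempty: "\<And>a. f a \<noteq> []"
    and eq: "concat (map f as) = concat (map f bs)"
  shows "as = bs"
  using eq
proof (induction as arbitrary: bs)
  case Nil
  then show ?case using nonempty by (cases bs) auto
next
  case (Cons a as)
  then obtain b bs' where bs: "bs = b # bs'"
    using nonempty by (cases bs) auto
  with Cons.prems have "f a @ concat (map f as) = f b @ concat (map f bs')"
    by simp
  with Cons.IH prefix_code show ?case by (simp add: bs)
qed

lemma takeWhile_append_Cons_stop:
  "d \<notin> set xs \<Longrightarrow> takeWhile (\<lambda>c. c \<noteq> d) (xs @ d # ys) = xs"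
  by (induction xs) auto

lemma set_enc_nat: "set (enc_nat a) \<subseteq> {1, 2, 3}"
  using set_bin[of a] by (auto simp: enc_nat_def)

lemma enc_nat_append_inject:
  assumes eq: "enc_nat a @ u = enc_nat b @ u'"
  shows "a = b \<and> u = u'"
proof -
  have "takeWhile (\<lambda>c. c \<noteq> 3) (enc_nat n @ v) = bin n" for n v
    using set_bin[of n] takeWhile_append_Cons_stop[of 3 "bin n"] by (force simp: enc_nat_def)
  from this[of a u] this[of b u'] eq have "a = b"
    by (simp add: bin_inject)
  with eq show ?thesis by simp
qed

lemma enc_fact_append_inject:
  assumes eq: "enc_fact f @ u = enc_fact f' @ u'"
  shows "f = f' \<and> u = u'"
proof -
  have fields: "takeWhile (\<lambda>c. c \<noteq> 4) (concat (map enc_nat as) @ 4 # v) = concat (map enc_nat as)"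
    for as v
    using set_enc_nat by (intro takeWhile_append_Cons_stop) fastforce
  obtain S as S' as' where f: "f = (S, as)" and f': "f' = (S', as')"
    by (cases f, cases f')
  from eq have "enc_nat S @ concat (map enc_nat as) @ 4 # u = enc_nat S' @ concat (map enc_nat as') @ 4 # u'"
    by (simp add: f f' enc_fact_def)
  then have S: "S = S'" and rest: "concat (map enc_nat as) @ 4 # u = concat (map enc_nat as') @ 4 # u'"
    using enc_nat_append_inject by blast+
  from arg_cong[OF rest, of "takeWhile (\<lambda>c. c \<noteq> 4)"]
  have "concat (map enc_nat as) = concat (map enc_nat as')"
    unfolding fields .
  moreover have "enc_nat n \<noteq> []" for n
    by (simp add: enc_nat_def)
  ultimately have "as = as'"
    using concat_map_inject_prefix_code[OF enc_nat_append_inject] by blast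
  with rest S show ?thesis by (simp add: f f')
qed

lemma enc_db_inject: "enc_db fs = enc_db fs' \<longleftrightarrow> fs = fs'"
proof
  have "enc_fact f \<noteq> []" for f
    by (simp add: enc_fact_def)
  then show "enc_db fs = enc_db fs' \<Longrightarrow> fs = fs'"
    unfolding enc_db_def using concat_map_inject_prefix_code[OF enc_fact_append_inject] by blast
qed simp

section \<open>Repairs under a key-preserving injection\<close>

definition key_preserving :: "nat \<Rightarrow> (fact \<Rightarrow> fact) \<Rightarrow> fact set \<Rightarrow> bool" where
  "key_preserving l h D \<longleftrightarrow>
     inj_on h D \<and> (\<forall>f\<in>D. \<forall>g\<in>D. key_equal l (h f) (h g) \<longleftrightarrow> key_equal l f g)"

lemma consistent_image_iff:
  assumes "key_preserving l h D" and "r \<subseteq> D"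
  shows "consistent l (h ` r) \<longleftrightarrow> consistent l r"
proof -
  have inj: "inj_on h r" and key: "\<forall>f\<in>r. \<forall>g\<in>r. key_equal l (h f) (h g) \<longleftrightarrow> key_equal l f g"
    using assms inj_on_subset[of h D r] by (auto simp: key_preserving_def)
  show ?thesis
  proof
    assume "consistent l (h ` r)"
    with key have "\<forall>f\<in>r. \<forall>g\<in>r. key_equal l f g \<longrightarrow> h f = h g"
      unfolding consistent_def by blast
    with inj_onD[OF inj] show "consistent l r"
      unfolding consistent_def by blast
  next
    assume "consistent l r"
    show "consistent l (h ` r)"
      unfolding consistent_def
    proof (intro ballI impI)
      fix x y assume "x \<in> h ` r" "y \<in> h ` r" "key_equal l x y"
      then obtain f g where "f \<in> r" "g \<in> r" "x = h f" "y = h g" "key_equal l (h f) (h g)"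
        by blast
      with key \<open>consistent l r\<close> show "x = y"
        unfolding consistent_def by blast
    qed
  qed
qed

lemma is_repairI:
  assumes "r \<subseteq> D" and "consistent l r"
    and "\<And>s. r \<subseteq> s \<Longrightarrow> s \<subseteq> D \<Longrightarrow> consistent l s \<Longrightarrow> s = r"
  shows "is_repair l D r"
  using assms unfolding is_repair_def by blast

lemma is_repairD:
  assumes "is_repair l D r"
  shows "r \<subseteq> D" and "consistent l r"
    and "\<And>s. r \<subseteq> s \<Longrightarrow> s \<subseteq> D \<Longrightarrow> consistent l s \<Longrightarrow> s = r"
  using assms unfolding is_repair_def by blast+

lemma is_repair_image_iff:
  assumes kp: "key_preserving l h D"
  shows "is_repair l (h ` D) r' \<longleftrightarrow> (\<exists>r. is_repair l D r \<and> r' = h ` r)"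
proof
  assume rep: "is_repair l (h ` D) r'"
  let ?r = "D \<inter> h -` r'"
  have r'_image: "h ` ?r = r'"
    using is_repairD(1)[OF rep] by blast
  have "is_repair l D ?r"
  proof (rule is_repairI)
    show "consistent l ?r"
      using consistent_image_iff[OF kp, of ?r] is_repairD(2)[OF rep] by (simp add: r'_image)
    fix s assume s: "?r \<subseteq> s" "s \<subseteq> D" "consistent l s"
    have "h ` s = r'"
    proof (rule is_repairD(3)[OF rep])
      show "r' \<subseteq> h ` s" using s(1) r'_image by blast
      show "h ` s \<subseteq> h ` D" using s(2) by (rule image_mono)
      show "consistent l (h ` s)" using consistent_image_iff[OF kp s(2)] s(3) by simp
    qed
    with s(1,2) show "s = ?r" by blast
  qed simp
  with r'_image show "\<exists>r. is_repair l D r \<and> r' = h ` r" by blast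
next
  assume "\<exists>r. is_repair l D r \<and> r' = h ` r"
  then obtain r where rep: "is_repair l D r" and r': "r' = h ` r" by blast
  note r_sub = is_repairD(1)[OF rep]
  show "is_repair l (h ` D) r'"
  proof (rule is_repairI)
    show "r' \<subseteq> h ` D" using r_sub r' by blast
    show "consistent l r'"
      using consistent_image_iff[OF kp r_sub] is_repairD(2)[OF rep] by (simp add: r')
    fix s' assume s': "r' \<subseteq> s'" "s' \<subseteq> h ` D" "consistent l s'"
    let ?s = "D \<inter> h -` s'"
    have s'_image: "h ` ?s = s'" using s'(2) by blast
    have "?s = r"
    proof (rule is_repairD(3)[OF rep])
      show "r \<subseteq> ?s" using s'(1) r_sub r' by blast
      show "consistent l ?s" using consistent_image_iff[OF kp, of ?s] s'(3) by (simp add: s'_image)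
    qed simp
    with s'_image r' show "s' = r'" by blast
  qed
qed

lemma certain_image_iff:
  assumes "key_preserving l h D"
  shows "certain l P (h ` D) \<longleftrightarrow> (\<forall>r. is_repair l D r \<longrightarrow> P (h ` r))"
  unfolding certain_def is_repair_image_iff[OF assms] by blast

lemma not_certain_sat2_empty: "\<not> certain l (sat2 A B) {}"
proof -
  have "is_repair l {} {}"
    by (simp add: is_repair_def consistent_def)
  moreover have "\<not> sat2 A B {}"
    by (simp add: sat2_def)
  ultimately show ?thesis
    unfolding certain_def by blast
qed

lemma enc_db_in_certain_lang_iff:
  "enc_db fs \<in> certain_lang Ss k l P \<longleftrightarrow> distinct fs \<and> db_over Ss k (set fs) \<and> certain l P (set fs)"
  by (auto simp: certain_lang_def enc_db_inject)

lemma Nil_notin_certain_lang: "[] \<notin> certain_lang Ss k l (sat2 A B)"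
proof
  assume "[] \<in> certain_lang Ss k l (sat2 A B)"
  then obtain fs where "enc_db fs = enc_db []" and "certain l (sat2 A B) (set fs)"
    by (auto simp: certain_lang_def enc_db_def)
  then show False
    using not_certain_sat2_empty by (simp add: enc_db_inject)
qed

section \<open>The reduction on databases\<close>

declare relR_def [simp] relR1_def [simp] relR2_def [simp]

lemma map2_map_left_same: "map2 f (map g zs) zs = map (\<lambda>z. f (g z) z) zs"
  by (induction zs) auto

definition fact_over :: "nat set \<Rightarrow> nat \<Rightarrow> fact \<Rightarrow> bool" where
  "fact_over Ss k f \<longleftrightarrow> fst f \<in> Ss \<and> length (snd f) = k"

lemma db_over_iff: "db_over Ss k D \<longleftrightarrow> finite D \<and> (\<forall>f\<in>D. fact_over Ss k f)"
  by (auto simp: db_over_def fact_over_def)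

lemma sat2_iff_sat1_if_fold:
  assumes "map h xs = zs" and "map h ys = zs" and "zs = xs \<or> zs = ys"
  shows "sat2 (S, xs) (S, ys) D \<longleftrightarrow> sat1 (S, zs) D"
proof
  assume "sat2 (S, xs) (S, ys) D"
  with assms(3) show "sat1 (S, zs) D" by (auto simp: sat2_def sat1_def)
next
  assume "sat1 (S, zs) D"
  then obtain \<nu> where "(S, map \<nu> zs) \<in> D" by (auto simp: sat1_def)
  moreover have "map (\<nu> \<circ> h) xs = map \<nu> zs" "map (\<nu> \<circ> h) ys = map \<nu> zs"
    using assms(1,2) by (simp_all only: map_map[symmetric])
  ultimately show "sat2 (S, xs) (S, ys) D"
    unfolding sat2_def by (metis fst_conv snd_conv)
qed

lemma standing_assumption_no_fold:
  assumes "standing_assumption k l xs ys" and "length xs = k" and "length ys = k"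
    and "map h xs = zs" and "map h ys = zs" and "zs = xs \<or> zs = ys"
  shows False
proof -
  have "length zs = k" using assms(2-6) by auto
  moreover have "sat2 (relR, xs) (relR, ys) D \<longleftrightarrow> sat1 (relR, zs) D" for D
    using sat2_iff_sat1_if_fold[OF assms(4-6)] .
  ultimately show False
    using assms(1) unfolding standing_assumption_def by blast
qed

locale sjf_reduction =
  fixes k l :: nat and xs ys :: "nat list" and m :: nat
  assumes length_xs: "length xs = k" and length_ys: "length ys = k"
    and standing: "standing_assumption k l xs ys"
    and vars_bound: "\<forall>v \<in> set xs \<union> set ys. v < 2 ^ m"
begin

definition vars :: "nat \<Rightarrow> nat list" where
  "vars S = (if S = relR1 then xs else ys)"

lemma length_vars [simp]: "length (vars S) = k"
  by (simp add: vars_def length_xs length_ys)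

lemma vars_less: "\<forall>v\<in>set (vars S). v < 2 ^ m"
  using vars_bound by (simp add: vars_def)

lemma take_vars_inject:
  "S \<in> {relR1, relR2} \<Longrightarrow> S' \<in> {relR1, relR2} \<Longrightarrow> take l (vars S) = take l (vars S') \<Longrightarrow> S = S'"
  using standing by (auto simp: standing_assumption_def vars_def)

definition tag_fact :: "fact \<Rightarrow> fact" where
  "tag_fact f = (relR, map2 (pair_code m) (snd f) (vars (fst f)))"

lemma tag_fact_decode:
  assumes "length (snd f) = k"
  shows "map (code_fst m) (snd (tag_fact f)) = snd f"
    and "map (code_snd m) (snd (tag_fact f)) = vars (fst f)"
proof -
  show "map (code_fst m) (snd (tag_fact f)) = snd f"
    unfolding tag_fact_def snd_conv by (rule map_code_fst_map2_pair_code) (simp add: assms)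
  show "map (code_snd m) (snd (tag_fact f)) = vars (fst f)"
    unfolding tag_fact_def snd_conv by (rule map_code_snd_map2_pair_code) (simp_all add: assms vars_less)
qed

lemma take_tag_fact_eqD:
  assumes "fact_over {relR1, relR2} k f" and "fact_over {relR1, relR2} k g"
    and "take j (snd (tag_fact f)) = take j (snd (tag_fact g))" and "l \<le> j"
  shows "take j (snd f) = take j (snd g) \<and> fst f = fst g"
proof -
  have "map (code_fst m) (take j (snd (tag_fact f))) = map (code_fst m) (take j (snd (tag_fact g)))"
    and "map (code_snd m) (take j (snd (tag_fact f))) = map (code_snd m) (take j (snd (tag_fact g)))"
    using assms(3) by simp_all
  then have "take j (snd f) = take j (snd g)" and "take j (vars (fst f)) = take j (vars (fst g))"
    using assms(1,2) by (simp_all add: fact_over_def tag_fact_decode flip: take_map)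
  moreover from this(2) have "take l (take j (vars (fst f))) = take l (take j (vars (fst g)))"
    by (rule arg_cong)
  then have "take l (vars (fst f)) = take l (vars (fst g))"
    using assms(4) by (simp add: min_absorb1)
  with assms(1,2) have "fst f = fst g"
    by (intro take_vars_inject) (simp_all add: fact_over_def)
  ultimately show ?thesis by blast
qed

lemma key_preserving_tag_fact:
  assumes over: "\<forall>f\<in>D. fact_over {relR1, relR2} k f"
  shows "key_preserving l tag_fact D"
proof -
  have "inj_on tag_fact D"
  proof (rule inj_onI)
    fix f g assume "f \<in> D" "g \<in> D" "tag_fact f = tag_fact g"
    moreover have "length (snd f) = k" "length (snd g) = k"
      using over \<open>f \<in> D\<close> \<open>g \<in> D\<close> by (auto simp: fact_over_def)
    ultimately show "f = g"
      using take_tag_fact_eqD[of f g "max l k"] over by (simp add: prod_eq_iff)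
  qed
  moreover have "key_equal l (tag_fact f) (tag_fact g) \<longleftrightarrow> key_equal l f g"
    if "f \<in> D" "g \<in> D" for f g
  proof
    assume "key_equal l (tag_fact f) (tag_fact g)"
    then have "take l (snd (tag_fact f)) = take l (snd (tag_fact g))"
      by (simp add: key_equal_def key_tuple_def)
    with take_tag_fact_eqD[of f g l] over that show "key_equal l f g"
      by (simp add: key_equal_def key_tuple_def)
  next
    assume "key_equal l f g"
    then show "key_equal l (tag_fact f) (tag_fact g)"
      by (simp add: key_equal_def key_tuple_def tag_fact_def take_map take_zip)
  qed
  ultimately show ?thesis
    by (simp add: key_preserving_def)
qed

lemma sat2_tag_fact_imageI:
  assumes "sat2 (relR1, xs) (relR2, ys) r"
  shows "sat2 (relR, xs) (relR, ys) (tag_fact ` r)"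
proof -
  obtain \<mu> where "(relR1, map \<mu> xs) \<in> r" "(relR2, map \<mu> ys) \<in> r"
    using assms by (auto simp: sat2_def)
  moreover define \<nu> where "\<nu> v = pair_code m (\<mu> v) v" for v
  then have "tag_fact (relR1, map \<mu> xs) = (relR, map \<nu> xs)"
    and "tag_fact (relR2, map \<mu> ys) = (relR, map \<nu> ys)"
    by (simp_all add: tag_fact_def vars_def map2_map_left_same)
  ultimately have "(relR, map \<nu> xs) \<in> tag_fact ` r" "(relR, map \<nu> ys) \<in> tag_fact ` r"
    by (metis image_eqI)+
  then show ?thesis
    unfolding sat2_def by (intro exI[of _ \<nu>]) simp
qed

lemma tag_fact_eq_map_decode:
  assumes "fact_over {relR1, relR2} k f" and "tag_fact f = (relR, map \<mu> zs)" and "length zs = k"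
  shows "map (code_snd m \<circ> \<mu>) zs = vars (fst f)" and "map (code_fst m \<circ> \<mu>) zs = snd f"
  using tag_fact_decode[of f] assms by (simp_all add: fact_over_def flip: map_map)

lemma sat2_of_tag_fact_image:
  assumes over: "\<forall>f\<in>r. fact_over {relR1, relR2} k f"
    and "sat2 (relR, xs) (relR, ys) (tag_fact ` r)"
  shows "sat2 (relR1, xs) (relR2, ys) r"
proof -
  obtain \<mu> where "(relR, map \<mu> xs) \<in> tag_fact ` r" "(relR, map \<mu> ys) \<in> tag_fact ` r"
    using assms(2) by (auto simp: sat2_def)
  then obtain f g where fg: "f \<in> r" "g \<in> r"
    and tag_f: "tag_fact f = (relR, map \<mu> xs)" and tag_g: "tag_fact g = (relR, map \<mu> ys)"
    by (metis imageE)
  define h where "h = code_snd m \<circ> \<mu>"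
  define \<nu> where "\<nu> = code_fst m \<circ> \<mu>"
  have f: "map h xs = vars (fst f)" "map \<nu> xs = snd f"
    using tag_fact_eq_map_decode[OF _ tag_f length_xs] over fg by (simp_all add: h_def \<nu>_def)
  have g: "map h ys = vars (fst g)" "map \<nu> ys = snd g"
    using tag_fact_eq_map_decode[OF _ tag_g length_ys] over fg by (simp_all add: h_def \<nu>_def)
  txt \<open>Facts over one relation symbol would make \<open>h\<close> fold \<open>q\<close> onto a single atom.\<close>
  have "fst f \<noteq> fst g"
  proof
    assume "fst f = fst g"
    with f g have "map h xs = vars (fst f)" "map h ys = vars (fst f)" by simp_all
    moreover have "vars (fst f) = xs \<or> vars (fst f) = ys"
      by (simp add: vars_def)
    ultimately show False
      by (rule standing_assumption_no_fold[OF standing length_xs length_ys])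
  qed
  moreover have "fst f \<in> {relR1, relR2}" "fst g \<in> {relR1, relR2}"
    using over fg by (simp_all add: fact_over_def)
  ultimately consider "fst f = relR1" "fst g = relR2" | "fst f = relR2" "fst g = relR1"
    by auto
  then show ?thesis
  proof cases
    case 1
    with f g have "f = (relR1, map \<nu> xs)" "g = (relR2, map \<nu> ys)"
      by (simp_all add: prod_eq_iff)
    with fg show ?thesis
      unfolding sat2_def by (intro exI[of _ \<nu>]) simp
  next
    case 2
    with f g have "g = (relR1, map (\<nu> \<circ> h) xs)" "f = (relR2, map (\<nu> \<circ> h) ys)"
      by (simp_all add: prod_eq_iff vars_def flip: map_map)
    with fg show ?thesis
      unfolding sat2_def by (intro exI[of _ "\<nu> \<circ> h"]) simp
  qed
qed

lemma certain_tag_fact_image: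
  assumes "\<forall>f\<in>D. fact_over {relR1, relR2} k f"
  shows "certain l (sat2 (relR, xs) (relR, ys)) (tag_fact ` D) \<longleftrightarrow>
    certain l (sat2 (relR1, xs) (relR2, ys)) D"
proof -
  have "sat2 (relR, xs) (relR, ys) (tag_fact ` r) \<longleftrightarrow> sat2 (relR1, xs) (relR2, ys) r"
    if "is_repair l D r" for r
    using that assms sat2_tag_fact_imageI sat2_of_tag_fact_image[of r] by (auto dest: is_repairD(1))
  then have "(\<forall>r. is_repair l D r \<longrightarrow> sat2 (relR, xs) (relR, ys) (tag_fact ` r)) \<longleftrightarrow>
      (\<forall>r. is_repair l D r \<longrightarrow> sat2 (relR1, xs) (relR2, ys) r)"
    by blast
  then show ?thesis
    using certain_image_iff[OF key_preserving_tag_fact[OF assms]] by (simp add: certain_def)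
qed

end

fun transducer_run ::
  "('q \<Rightarrow> nat \<Rightarrow> ('q \<times> nat list) option) \<Rightarrow> 'q \<Rightarrow> nat list \<Rightarrow> ('q \<times> nat list) option" where
  "transducer_run \<delta> q [] = Some (q, [])"
| "transducer_run \<delta> q (c # w) =
     (case \<delta> q c of
        None \<Rightarrow> None
      | Some (q', u) \<Rightarrow>
          (case transducer_run \<delta> q' w of
             None \<Rightarrow> None
           | Some (q'', v) \<Rightarrow> Some (q'', u @ v)))"

definition transducer_fun ::
  "('q \<Rightarrow> nat \<Rightarrow> ('q \<times> nat list) option) \<Rightarrow> 'q \<Rightarrow> nat list \<Rightarrow> nat list" where
  "transducer_fun \<delta> q0 w =
     (case transducer_run \<delta> q0 w of Some (q, u) \<Rightarrow> if q = q0 then u else [] | None \<Rightarrow> [])"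

lemma transducer_run_Cons_eq_Some:
  "transducer_run \<delta> q (c # w) = Some (q'', u) \<longleftrightarrow>
    (\<exists>q' u1 u2. \<delta> q c = Some (q', u1) \<and> transducer_run \<delta> q' w = Some (q'', u2) \<and> u = u1 @ u2)"
  by (auto split: option.splits)

lemma transducer_run_append:
  "transducer_run \<delta> q (w1 @ w2) =
    (case transducer_run \<delta> q w1 of
       None \<Rightarrow> None
     | Some (q', u) \<Rightarrow>
         (case transducer_run \<delta> q' w2 of
            None \<Rightarrow> None
          | Some (q'', v) \<Rightarrow> Some (q'', u @ v)))"
  by (induction w1 arbitrary: q) (auto split: option.splits)

lemma transducer_run_appendI:
  "transducer_run \<delta> q w1 = Some (q', u) \<Longrightarrow> transducer_run \<delta> q' w2 = Some (q'', v) \<Longrightarrow>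
    transducer_run \<delta> q (w1 @ w2) = Some (q'', u @ v)"
  by (simp add: transducer_run_append)

lemma transducer_run_if_transducer_fun:
  "transducer_fun \<delta> q0 w \<noteq> [] \<Longrightarrow> transducer_run \<delta> q0 w = Some (q0, transducer_fun \<delta> q0 w)"
  by (auto simp: transducer_fun_def split: option.splits if_splits)

lemma transducer_fun_if_prefix_stuck:
  assumes "transducer_run \<delta> q0 (take i w) = Some (q, out)" and "i < length w"
    and "\<delta> q (w ! i) = None"
  shows "transducer_fun \<delta> q0 w = []"
proof -
  have "transducer_run \<delta> q0 (take (Suc i) w) = None"
    using assms by (simp add: take_Suc_conv_app_nth transducer_run_append)
  then show ?thesis
    using transducer_run_append[of \<delta> q0 "take (Suc i) w" "drop (Suc i) w"]
    by (simp add: transducer_fun_def)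
qed

section \<open>Turing machines from finite controls acting on a tape\<close>

definition reaches :: "('c \<Rightarrow> 'c) \<Rightarrow> 'c \<Rightarrow> nat \<Rightarrow> 'c \<Rightarrow> bool" where
  "reaches step c t c' \<longleftrightarrow> (step ^^ t) c = c'"

lemma reaches_trans [trans]:
  "reaches step c t1 c' \<Longrightarrow> reaches step c' t2 c'' \<Longrightarrow> reaches step c (t1 + t2) c''"
  unfolding reaches_def by (metis comp_apply funpow_add add.commute)

lemma reaches_cong:
  "reaches step c t c' \<Longrightarrow> c = d \<Longrightarrow> t = t' \<Longrightarrow> c' = d' \<Longrightarrow> reaches step d t' d'"
  by simp

lemma reaches_0 [simp]: "reaches step c 0 c' \<longleftrightarrow> c' = c"
  by (auto simp: reaches_def)

lemma reaches_1: "reaches step c 1 c' \<longleftrightarrow> step c = c'"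
  by (simp add: reaches_def)

lemma reaches_Suc_0 [simp]: "reaches step c (Suc 0) c' \<longleftrightarrow> step c = c'"
  by (simp add: reaches_def)

definition tape :: "nat list \<Rightarrow> nat \<Rightarrow> nat" where
  "tape xs i = (if i < length xs then xs ! i else 0)"

lemma tape_beyond: "length xs \<le> i \<Longrightarrow> tape xs i = 0"
  by (simp add: tape_def)

lemma tape_at [simp]: "tape (xs @ c # ys) (length xs) = c"
  by (simp add: tape_def nth_append)

lemma tape_in_segment:
  "length xs \<le> i \<Longrightarrow> i < length xs + length ys \<Longrightarrow> tape (xs @ ys @ zs) i \<in> set ys"
  by (auto simp: tape_def nth_append)

lemma tape_Cons_0 [simp]: "tape (c # xs) 0 = c"
  by (simp add: tape_def)

lemma tape_Cons_Suc [simp]: "tape (c # xs) (Suc i) = tape xs i"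
  by (simp add: tape_def)

lemma tape_update: "(tape (xs @ c # ys))(length xs := d) = tape (xs @ d # ys)"
  by (rule ext) (simp add: tape_def nth_append list_update_append)

lemma tape_update_snoc: "(tape xs)(length xs := d) = tape (xs @ [d])"
  by (rule ext) (auto simp: tape_def nth_append)

lemma tape_update_beyond: "length xs \<le> i \<Longrightarrow> (tape xs)(i := 0) = tape xs"
  by (rule ext) (auto simp: tape_def)

definition output_on_tape :: "(nat \<Rightarrow> nat) \<Rightarrow> nat list \<Rightarrow> bool" where
  "output_on_tape T u \<longleftrightarrow> (\<forall>i<length u. T i = u ! i) \<and> T (length u) = 0"

lemma output_on_tape_Nil [simp]: "output_on_tape T [] \<longleftrightarrow> T 0 = 0"
  by (simp add: output_on_tape_def)

lemma takeWhile_if_output_on_tape: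
  "output_on_tape (tape xs) u \<Longrightarrow> 0 \<notin> set u \<Longrightarrow> takeWhile (\<lambda>s. s \<noteq> 0) xs = u"
proof (induction u arbitrary: xs)
  case Nil
  then show ?case by (cases xs) (auto simp: tape_def)
next
  case (Cons c u)
  then obtain xs' where xs: "xs = c # xs'"
    by (cases xs) (auto simp: output_on_tape_def tape_def)
  have "output_on_tape (tape xs') u"
    unfolding output_on_tape_def
  proof (intro conjI allI impI)
    fix i assume "i < length u"
    with Cons.prems(1) show "tape xs' i = u ! i"
      unfolding output_on_tape_def xs by (metis Suc_less_eq length_Cons nth_Cons_Suc tape_Cons_Suc)
  next
    show "tape xs' (length u) = 0"
      using Cons.prems(1) unfolding output_on_tape_def xs by simp
  qed
  with Cons xs show ?case by simp
qed

type_synonym 'a tape_config = "'a \<times> nat \<times> (nat \<Rightarrow> nat)"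

definition machine_step ::
  "('a \<Rightarrow> nat \<Rightarrow> 'a \<times> nat \<times> move) \<Rightarrow> 'a \<Rightarrow> 'a tape_config \<Rightarrow> 'a tape_config" where
  "machine_step act halt c = (case c of (a, p, T) \<Rightarrow>
     if a = halt then c
     else (case act a (T p) of (a', s, mv) \<Rightarrow>
             (a', case mv of MRight \<Rightarrow> Suc p | MLeft \<Rightarrow> p - 1, T(p := s))))"

lemma machine_step_right:
  "a \<noteq> halt \<Longrightarrow> act a (T p) = (a', s, MRight) \<Longrightarrow>
    machine_step act halt (a, p, T) = (a', Suc p, T(p := s))"
  by (simp add: machine_step_def)

lemma machine_step_left:
  "a \<noteq> halt \<Longrightarrow> act a (T p) = (a', s, MLeft) \<Longrightarrow>
    machine_step act halt (a, p, T) = (a', p - 1, T(p := s))"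
  by (simp add: machine_step_def)

lemma sweep_right:
  assumes "a \<noteq> halt" and "\<forall>i. p \<le> i \<and> i < p + d \<longrightarrow> T i \<in> S"
    and "\<forall>s\<in>S. act a s = (a, s, MRight)"
  shows "reaches (machine_step act halt) (a, p, T) d (a, p + d, T)"
  using assms(2)
proof (induction d arbitrary: p)
  case (Suc d)
  then have "T p \<in> S" by simp
  then have "reaches (machine_step act halt) (a, p, T) 1 (a, Suc p, T)"
    using assms(1,3) machine_step_right[of a halt act T p] by (simp add: reaches_1)
  also have "reaches (machine_step act halt) (a, Suc p, T) d (a, Suc p + d, T)"
    using Suc.IH[of "Suc p"] Suc.prems by simp
  finally show ?case by simp
qed simp

lemma sweep_left:
  assumes "a \<noteq> halt" and "\<forall>i. p < i \<and> i \<le> p + d \<longrightarrow> T i \<in> S"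
    and "\<forall>s\<in>S. act a s = (a, s, MLeft)"
  shows "reaches (machine_step act halt) (a, p + d, T) d (a, p, T)"
  using assms(2)
proof (induction d)
  case (Suc d)
  then have "T (p + Suc d) \<in> S" by simp
  then have "reaches (machine_step act halt) (a, p + Suc d, T) 1 (a, p + d, T)"
    using assms(1,3) machine_step_left[of a halt act T "p + Suc d"] by (simp add: reaches_1)
  also have "reaches (machine_step act halt) (a, p + d, T) d (a, p, T)"
    using Suc.IH Suc.prems by simp
  finally show ?case by simp
qed simp

lemma sweep_right_segment:
  assumes "a \<noteq> halt" and "\<forall>s\<in>set Q. act a s = (a, s, MRight)"
  shows "reaches (machine_step act halt) (a, length P, tape (P @ Q @ R)) (length Q)
    (a, length P + length Q, tape (P @ Q @ R))"
  using assms tape_in_segment[of P _ Q R] by (intro sweep_right[where S = "set Q"]) auto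

lemma sweep_left_segment:
  assumes "P \<noteq> []" and "a \<noteq> halt" and "\<forall>s\<in>set Q. act a s = (a, s, MLeft)"
  shows "reaches (machine_step act halt) (a, length P - 1 + length Q, tape (P @ Q @ R)) (length Q)
    (a, length P - 1, tape (P @ Q @ R))"
proof (rule sweep_left[where S = "set Q"])
  show "\<forall>i. length P - 1 < i \<and> i \<le> length P - 1 + length Q \<longrightarrow> tape (P @ Q @ R) i \<in> set Q"
    using assms(1) tape_in_segment[of P _ Q R] by (cases P) auto
qed (use assms in auto)

text \<open>The halting control is coded as state \<open>0\<close> and the start control as state \<open>1\<close>,
  as \<open>tm_step\<close> and \<open>tm_init\<close> require.\<close>

definition control_code :: "'a \<Rightarrow> 'a \<Rightarrow> 'a::countable \<Rightarrow> nat" where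
  "control_code halt start a = (if a = halt then 0 else if a = start then 1 else to_nat a + 2)"

lemma inj_control_code: "inj (control_code halt start)"
  by (rule injI) (auto simp: control_code_def split: if_splits)

lemma control_code_eq_0_iff: "control_code halt start a = 0 \<longleftrightarrow> a = halt"
  by (simp add: control_code_def)

definition compiled_tm ::
  "('a::countable \<Rightarrow> nat \<Rightarrow> 'a \<times> nat \<times> move) \<Rightarrow> 'a \<Rightarrow> 'a \<Rightarrow> 'a set \<Rightarrow> nat \<Rightarrow> tm" where
  "compiled_tm act halt start A n =
     \<lparr>n_states = Suc (Max (control_code halt start ` A)), n_syms = n,
      delta = (\<lambda>q s. if q \<in> control_code halt start ` A
                     then (case act (inv (control_code halt start) q) s of
                             (a', s', mv) \<Rightarrow> (control_code halt start a', s', mv))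
                     else (0, 0, MRight))\<rparr>"

locale finite_control =
  fixes act :: "'a::countable \<Rightarrow> nat \<Rightarrow> 'a \<times> nat \<times> move" and halt start :: 'a
    and A :: "'a set" and n :: nat
  assumes finite_A: "finite A" and start_in_A: "start \<in> A" and start_neq_halt: "start \<noteq> halt"
    and act_in_A: "a \<in> A \<Longrightarrow> fst (act a s) \<in> A"
    and act_symbol_less: "a \<in> A \<Longrightarrow> s < n \<Longrightarrow> fst (snd (act a s)) < n"
    and five_le_n: "5 \<le> n"
begin

abbreviation code :: "'a \<Rightarrow> nat" where
  "code \<equiv> control_code halt start"

abbreviation M :: tm where
  "M \<equiv> compiled_tm act halt start A n"

lemma inv_code [simp]: "inv code (code a) = a"
  by (simp add: inj_control_code)

lemma wf_tm_compiled: "wf_tm M"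
proof -
  have "code start = 1"
    using start_neq_halt by (simp add: control_code_def)
  then have "1 \<le> Max (code ` A)"
    using finite_A start_in_A by (metis Max_ge finite_imageI imageI)
  moreover have "fst (delta M q s) < n_states M \<and> fst (snd (delta M q s)) < n_syms M"
    if "s < n" for q s
  proof (cases "q \<in> code ` A")
    case True
    then obtain a where a: "a \<in> A" "q = code a" by blast
    obtain a' s' mv where act: "act a s = (a', s', mv)" by (cases "act a s")
    have "a' \<in> A" and "s' < n"
      using act_in_A[OF a(1), of s] act_symbol_less[OF a(1) that] by (simp_all add: act)
    then have "code a' \<le> Max (code ` A)"
      using finite_A by simp
    with \<open>s' < n\<close> a act show ?thesis
      by (simp add: compiled_tm_def)
  qed (use five_le_n in \<open>simp add: compiled_tm_def\<close>)
  ultimately show ?thesis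
    using five_le_n by (simp add: wf_tm_def compiled_tm_def)
qed

definition simulates :: "config \<Rightarrow> 'a tape_config \<Rightarrow> bool" where
  "simulates c C \<longleftrightarrow> (case c of (q, ls, rs) \<Rightarrow> case C of (a, p, T) \<Rightarrow>
     a \<in> A \<and> q = code a \<and> p = length ls \<and> T = tape (rev ls @ rs))"

lemma tape_rev_read: "tape (rev ls @ rs) (length ls) = (case rs of [] \<Rightarrow> 0 | x # _ \<Rightarrow> x)"
  by (cases rs) (simp_all add: tape_def nth_append)

lemma tape_rev_write: "tape (rev ls @ s # tl rs) = (tape (rev ls @ rs))(length ls := s)"
  using tape_update_snoc[of "rev ls" s] tape_update[of "rev ls" _ "tl rs" s]
  by (cases rs) simp_all

lemma simulates_step:
  assumes "simulates c C"
  shows "simulates (tm_step M c) (machine_step act halt C)"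
proof -
  obtain a ls rs where c: "c = (code a, ls, rs)" and C: "C = (a, length ls, tape (rev ls @ rs))"
    and "a \<in> A"
    using assms by (auto simp: simulates_def split: prod.splits)
  show ?thesis
  proof (cases "a = halt")
    case True
    with assms show ?thesis
      by (simp add: c C tm_step_def machine_step_def control_code_def)
  next
    case False
    define s where "s = (case rs of [] \<Rightarrow> 0 | x # _ \<Rightarrow> x)"
    obtain a' s' mv where act: "act a s = (a', s', mv)" by (cases "act a s")
    have "a' \<in> A" using act_in_A[OF \<open>a \<in> A\<close>, of s] by (simp add: act)
    have delta: "delta M (code a) s = (code a', s', mv)"
      using \<open>a \<in> A\<close> act by (simp add: compiled_tm_def)
    have step: "machine_step act halt C =
        (a', case mv of MRight \<Rightarrow> Suc (length ls) | MLeft \<Rightarrow> length ls - 1,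
         tape (rev ls @ s' # tl rs))"
      using False act by (simp add: C machine_step_def tape_rev_read tape_rev_write s_def)
    have "code a \<noteq> 0"
      using False by (simp add: control_code_eq_0_iff)
    with delta \<open>a' \<in> A\<close> show ?thesis
      unfolding step c
      by (cases mv; cases ls) (simp_all add: tm_step_def simulates_def s_def[symmetric])
  qed
qed

lemma simulates_run: "simulates c C \<Longrightarrow> simulates (tm_run M t c) ((machine_step act halt ^^ t) C)"
  by (induction t) (simp_all add: tm_run_def simulates_step)

lemma tm_run_compiled:
  assumes run: "reaches (machine_step act halt) (start, 0, tape w) t (halt, p, T)"
    and out: "output_on_tape T u" and no_blank: "0 \<notin> set u"
  shows "fst (tm_run M t (tm_init w)) = 0 \<and> tm_output (tm_run M t (tm_init w)) = u"
proof -
  have "simulates (tm_init w) (start, 0, tape w)"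
    using start_in_A start_neq_halt by (simp add: simulates_def tm_init_def control_code_def)
  from simulates_run[OF this, of t] run have "simulates (tm_run M t (tm_init w)) (halt, p, T)"
    by (simp add: reaches_def)
  then obtain ls rs where final: "tm_run M t (tm_init w) = (0, ls, rs)"
    and "T = tape (rev ls @ rs)"
    by (auto simp: simulates_def control_code_def split: prod.splits)
  with out have "takeWhile (\<lambda>s. s \<noteq> 0) (rev ls @ rs) = u"
    by (intro takeWhile_if_output_on_tape no_blank) simp
  with final show ?thesis
    by (simp add: tm_output_def)
qed

lemma poly_time_computable_if_reaches:
  assumes reaches: "\<And>w. set w \<subseteq> {1, 2, 3, 4} \<Longrightarrow>
      \<exists>t \<le> c * (length w + 1) ^ d. \<exists>p T.
        reaches (machine_step act halt) (start, 0, tape w) t (halt, p, T) \<and> output_on_tape T (f w)"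
    and no_blank: "\<And>w. 0 \<notin> set (f w)"
  shows "poly_time_computable f"
proof -
  have "\<exists>t. t \<le> c * (length w + 1) ^ d \<and> fst (tm_run M t (tm_init w)) = 0 \<and>
      tm_output (tm_run M t (tm_init w)) = f w"
    if "set w \<subseteq> {1, 2, 3, 4}" for w
    using reaches[OF that] tm_run_compiled[OF _ _ no_blank] by blast
  then show ?thesis
    unfolding poly_time_computable_def using wf_tm_compiled by blast
qed

end

section \<open>Sequential transducers run in polynomial time\<close>

text \<open>The machine simulating a transducer uses the tape symbols \<open>1\<close>--\<open>4\<close> for input and
  output, \<open>5\<close> to separate the unread input from the output produced so far, \<open>6\<close> for
  consumed cells and \<open>7\<close> for the left end. For every input symbol it walks to the right end,
  appends the transducer's output there and walks back (\<open>Go_Right\<close>, \<open>Write\<close>,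
  \<open>Go_Left\<close>); this costs linear time per symbol. After an accepted input it moves the output
  cell by cell to the left end (\<open>Seek\<close>, \<open>Carry\<close>, \<open>Put\<close>) and blanks the cell behind it
  (\<open>Finish\<close>, \<open>Terminate\<close>); on rejection it blanks cell \<open>0\<close> (\<open>Reject\<close>).\<close>

datatype 'q control =
    Halt | Consume 'q bool | Go_Right 'q nat bool | Write 'q nat nat | Go_Left 'q
  | Reject | Seek | Carry nat | Put nat | Finish | Terminate

instance control :: (countable) countable
  by countable_datatype

text \<open>\<open>consumed_tape w i u\<close> is the tape after the first \<open>i \<ge> 1\<close> input symbols have been
  consumed with output \<open>u\<close>; \<open>shifted_tape W g U\<close> is the tape after \<open>W\<close> has been moved to
  the left end, with \<open>U\<close> still to be moved behind a gap of \<open>g + 1\<close> cells (the first of which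
  is the end marker while \<open>W\<close> is empty).\<close>

definition consumed_tape :: "nat list \<Rightarrow> nat \<Rightarrow> nat list \<Rightarrow> nat list" where
  "consumed_tape w i u = 7 # replicate (i - 1) 6 @ drop i w @ 5 # u"

lemma consumed_tape_split:
  "1 \<le> i \<Longrightarrow> i < length w \<Longrightarrow>
    consumed_tape w i u = (7 # replicate (i - 1) 6) @ w ! i # drop (Suc i) w @ 5 # u"
  by (simp add: consumed_tape_def Cons_nth_drop_Suc)

lemma consumed_tape_Suc:
  assumes "1 \<le> i"
  shows "consumed_tape w (Suc i) u = (7 # replicate (i - 1) 6) @ 6 # drop (Suc i) w @ 5 # u"
proof -
  obtain j where "i = Suc j" using assms by (cases i) auto
  then show ?thesis by (simp add: consumed_tape_def replicate_app_Cons_same)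
qed

definition shifted_tape :: "nat list \<Rightarrow> nat \<Rightarrow> nat list \<Rightarrow> nat list" where
  "shifted_tape W g U = (if W = [] then 7 # replicate g 6 else W @ replicate (Suc g) 6) @ U"

locale bounded_transducer =
  fixes \<delta> :: "'q::countable \<Rightarrow> nat \<Rightarrow> ('q \<times> nat list) option" and q0 :: 'q
    and Q :: "'q set" and B :: nat
  assumes finite_Q: "finite Q" and q0_in_Q: "q0 \<in> Q"
    and step_in_Q: "q \<in> Q \<Longrightarrow> \<delta> q c = Some (q', u) \<Longrightarrow> q' \<in> Q"
    and step_output: "\<delta> q c = Some (q', u) \<Longrightarrow> set u \<subseteq> {1, 2, 3, 4} \<and> length u \<le> B"
begin

definition write_output :: "'q \<Rightarrow> nat \<Rightarrow> nat \<Rightarrow> 'q control \<times> nat \<times> move" where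
  "write_output q s j = (case \<delta> q s of
      Some (q', u) \<Rightarrow>
        if j < length u then (Write q s (Suc j), u ! j, MRight) else (Go_Left q', 0, MLeft)
    | None \<Rightarrow> (Halt, 0, MRight))"

fun control_act :: "'q control \<Rightarrow> nat \<Rightarrow> 'q control \<times> nat \<times> move" where
  "control_act Halt s = (Halt, s, MRight)"
| "control_act (Consume q True) s =
     (if s \<in> {1, 2, 3, 4} \<and> \<delta> q s \<noteq> None then (Go_Right q s True, 7, MRight) else (Halt, 0, MRight))"
| "control_act (Consume q False) s =
     (if s \<in> {1, 2, 3, 4} then
        (if \<delta> q s = None then (Reject, 6, MLeft) else (Go_Right q s False, 6, MRight))
      else if s = 5 then (if q = q0 then (Seek, 6, MRight) else (Reject, 5, MLeft))
      else (Halt, s, MRight))"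
| "control_act (Go_Right q s first) c =
     (if c = 0 then (if first then (Write q s 0, 5, MRight) else write_output q s 0)
      else (Go_Right q s first, c, MRight))"
| "control_act (Write q s j) c = write_output q s j"
| "control_act (Go_Left q) c =
     (if c = 6 \<or> c = 7 then (Consume q False, c, MRight) else (Go_Left q, c, MLeft))"
| "control_act Reject c = (if c = 7 then (Halt, 0, MRight) else (Reject, c, MLeft))"
| "control_act Seek c =
     (if c = 6 then (Seek, 6, MRight) else if c = 0 then (Finish, 0, MLeft)
      else if c \<in> {1, 2, 3, 4} then (Carry c, 6, MLeft) else (Halt, c, MRight))"
| "control_act (Carry c) x =
     (if x = 6 then (Carry c, 6, MLeft) else if x = 7 then (Seek, c, MRight) else (Put c, x, MRight))"
| "control_act (Put c) x = (Seek, c, MRight)"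
| "control_act Finish x =
     (if x = 6 then (Finish, 6, MLeft) else if x = 7 then (Halt, 0, MRight) else (Terminate, x, MRight))"
| "control_act Terminate x = (Halt, 0, MRight)"

definition controls :: "'q control set" where
  "controls = {Halt, Reject, Seek, Finish, Terminate}
     \<union> (\<lambda>(q, b). Consume q b) ` (Q \<times> UNIV)
     \<union> (\<lambda>(q, s, b). Go_Right q s b) ` (Q \<times> {1, 2, 3, 4} \<times> UNIV)
     \<union> (\<lambda>(q, s, j). Write q s j) ` (Q \<times> {1, 2, 3, 4} \<times> {..B})
     \<union> Go_Left ` Q \<union> Carry ` {1, 2, 3, 4} \<union> Put ` {1, 2, 3, 4}"

lemma in_controls_iff [simp]:
  "Halt \<in> controls" "Reject \<in> controls" "Seek \<in> controls" "Finish \<in> controls"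
  "Terminate \<in> controls"
  "Consume q b \<in> controls \<longleftrightarrow> q \<in> Q"
  "Go_Right q s b \<in> controls \<longleftrightarrow> q \<in> Q \<and> s \<in> {1, 2, 3, 4}"
  "Write q s j \<in> controls \<longleftrightarrow> q \<in> Q \<and> s \<in> {1, 2, 3, 4} \<and> j \<le> B"
  "Go_Left q \<in> controls \<longleftrightarrow> q \<in> Q"
  "Carry c \<in> controls \<longleftrightarrow> c \<in> {1, 2, 3, 4}"
  "Put c \<in> controls \<longleftrightarrow> c \<in> {1, 2, 3, 4}"
  by (auto simp: controls_def image_iff)

lemma write_output_in_controls:
  assumes "q \<in> Q" and "s \<in> {1, 2, 3, 4}" and "j \<le> B"
  shows "fst (write_output q s j) \<in> controls"
proof (cases "\<delta> q s")
  case (Some r)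
  obtain q' u where r: "r = (q', u)" by (cases r)
  with Some have "length u \<le> B" and "q' \<in> Q"
    using step_output step_in_Q[OF assms(1)] by blast+
  with assms Some r show ?thesis
    by (simp add: write_output_def)
qed (simp add: write_output_def)

lemma control_act_in_controls:
  "a \<in> controls \<Longrightarrow> fst (control_act a s) \<in> controls"
  by (induction a s rule: control_act.induct) (simp_all add: write_output_in_controls q0_in_Q)

lemma control_act_symbol_less:
  assumes "a \<in> controls" and "s < 8"
  shows "fst (snd (control_act a s)) < 8"
proof -
  have "fst (snd (write_output q s' j)) < 8" for q s' j
  proof (cases "\<delta> q s'")
    case (Some r)
    obtain q' u where r: "r = (q', u)" by (cases r)
    with Some have "set u \<subseteq> {1, 2, 3, 4}" using step_output by blast
    then have "j < length u \<Longrightarrow> u ! j < 8" by (auto dest!: nth_mem)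
    with Some r show ?thesis by (simp add: write_output_def)
  qed (simp add: write_output_def)
  with assms show ?thesis
    by (induction a s rule: control_act.induct) auto
qed

sublocale finite_control control_act Halt "Consume q0 True" controls 8
proof
  show "finite controls"
    using finite_Q by (simp add: controls_def)
  show "Consume q0 True \<in> controls"
    using q0_in_Q by simp
  show "fst (control_act a s) \<in> controls" if "a \<in> controls" for a s
    using that by (rule control_act_in_controls)
  show "fst (snd (control_act a s)) < 8" if "a \<in> controls" and "s < 8" for a s
    using that by (rule control_act_symbol_less)
qed simp_all

abbreviation runs :: "'q control tape_config \<Rightarrow> nat \<Rightarrow> 'q control tape_config \<Rightarrow> bool" where
  "runs \<equiv> reaches (machine_step control_act Halt)"

lemma runs_right:
  "a \<noteq> Halt \<Longrightarrow> control_act a (T p) = (a', s, MRight) \<Longrightarrow> runs (a, p, T) 1 (a', Suc p, T(p := s))"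
  by (simp add: reaches_1 machine_step_right)

lemma runs_left:
  "a \<noteq> Halt \<Longrightarrow> control_act a (T p) = (a', s, MLeft) \<Longrightarrow> runs (a, p, T) 1 (a', p - 1, T(p := s))"
  by (simp add: reaches_1 machine_step_left)

lemma runs_write_output:
  assumes step: "\<delta> q s = Some (q', u)" and "a \<noteq> Halt"
    and act: "control_act a 0 = write_output q s j" and "j \<le> length u" and "L \<noteq> []"
  shows "runs (a, length L + j, tape (L @ take j u)) (length u - j + 1)
    (Go_Left q', length L + length u - 1, tape (L @ u))"
  using assms(2-4)
proof (induction "length u - j" arbitrary: j a)
  case 0
  then have j: "j = length u" by simp
  have "control_act a (tape (L @ u) (length L + j)) = (Go_Left q', 0, MLeft)"
    using 0 j step by (simp add: tape_beyond write_output_def)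
  from runs_left[where T = "tape (L @ u)" and p = "length L + j", OF \<open>a \<noteq> Halt\<close> this] j
  show ?case
    by (simp add: tape_update_beyond)
next
  case (Suc d)
  then have "j < length u" by simp
  have "control_act a (tape (L @ take j u) (length L + j)) = (Write q s (Suc j), u ! j, MRight)"
    using Suc.prems(2) \<open>j < length u\<close> step by (simp add: tape_beyond write_output_def)
  from runs_right[where T = "tape (L @ take j u)" and p = "length L + j", OF \<open>a \<noteq> Halt\<close> this]
  have "runs (a, length L + j, tape (L @ take j u)) 1
      (Write q s (Suc j), length L + Suc j, tape (L @ take (Suc j) u))"
    using \<open>j < length u\<close> tape_update_snoc[of "L @ take j u" "u ! j"]
    by (simp add: take_Suc_conv_app_nth)
  also have "runs \<dots> (length u - Suc j + 1) (Go_Left q', length L + length u - 1, tape (L @ u))"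
    using Suc.hyps(1)[of "Suc j" "Write q s (Suc j)"] Suc.hyps(2) \<open>j < length u\<close> by simp
  finally show ?case
    using \<open>j < length u\<close> by (simp add: Suc_diff_Suc)
qed

lemma runs_consume_first:
  assumes w: "set w \<subseteq> {1, 2, 3, 4}" "w \<noteq> []" and step: "\<delta> q (hd w) = Some (q', u)"
  shows "runs (Consume q True, 0, tape w) (2 * length w + 2 * length u + 3)
    (Consume q' False, 1, tape (consumed_tape w 1 u))"
proof -
  obtain s ws where sws: "w = s # ws" using w(2) by (cases w) auto
  with w step have s: "s \<in> {1, 2, 3, 4}" and ws: "set ws \<subseteq> {1, 2, 3, 4}"
    and step': "\<delta> q s = Some (q', u)"
    by auto
  with step_output have u: "set u \<subseteq> {1, 2, 3, 4}" by blast
  have "runs (Consume q True, 0, tape (s # ws)) 1 (Go_Right q s True, 1, tape (7 # ws))"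
    using runs_right[where T = "tape (s # ws)" and p = 0] s step' tape_update[of "[]" s ws 7]
    by simp
  also have "runs \<dots> (length ws) (Go_Right q s True, 1 + length ws, tape (7 # ws))"
    using sweep_right_segment[of "Go_Right q s True" Halt ws control_act "[7]" "[]"] ws by fastforce
  also have "runs \<dots> 1 (Write q s 0, length (7 # ws @ [5]) + 0, tape ((7 # ws @ [5]) @ take 0 u))"
    using runs_right[where T = "tape (7 # ws)" and p = "1 + length ws"]
      tape_update_snoc[of "7 # ws" 5]
    by (simp add: tape_beyond)
  also have "runs \<dots> (length u - 0 + 1)
      (Go_Left q', length (7 # ws @ [5]) + length u - 1, tape ((7 # ws @ [5]) @ u))"
    by (rule runs_write_output[OF step']) simp_all
  also have "runs \<dots> (length (ws @ 5 # u)) (Go_Left q', 0, tape (7 # ws @ 5 # u))"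
    using sweep_left_segment[of "[7]" "Go_Left q'" Halt "ws @ 5 # u" control_act "[]"] ws u
    by fastforce
  also have "runs \<dots> 1 (Consume q' False, 1, tape (7 # ws @ 5 # u))"
    using runs_right[where T = "tape (7 # ws @ 5 # u)" and p = 0] by (simp add: fun_upd_idem)
  finally show ?thesis
    by (rule reaches_cong) (simp_all add: sws consumed_tape_def)
qed

lemma runs_consume_next:
  assumes w: "set w \<subseteq> {1, 2, 3, 4}" and i: "1 \<le> i" "i < length w"
    and step: "\<delta> q (w ! i) = Some (q', u)" and out: "set out \<subseteq> {1, 2, 3, 4}"
  shows "runs (Consume q False, i, tape (consumed_tape w i out))
    (2 * length w + 2 * length out + 2 * length u + 3 - 2 * i)
    (Consume q' False, Suc i, tape (consumed_tape w (Suc i) (out @ u)))"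
proof -
  define P where "P = 7 # replicate (i - 1) (6::nat)"
  define s where "s = w ! i"
  define R where "R = drop (Suc i) w @ 5 # out"
  have lP: "length P = i" using i by (simp add: P_def)
  have s: "s \<in> {1, 2, 3, 4}" using w i nth_mem unfolding s_def by blast
  have step': "\<delta> q s = Some (q', u)" using step by (simp add: s_def)
  with step_output have u: "set u \<subseteq> {1, 2, 3, 4}" by blast
  have R: "set R \<subseteq> {1, 2, 3, 4, 5}" using w out by (auto simp: R_def dest: in_set_dropD)
  have "runs (Consume q False, i, tape (P @ s # R)) 1 (Go_Right q s False, Suc i, tape (P @ 6 # R))"
    using runs_right[where T = "tape (P @ s # R)" and p = i] s step' lP tape_update[of P s R 6]
      tape_at[of P s R]
    by simp
  also have "runs \<dots> (length R) (Go_Right q s False, Suc i + length R, tape (P @ 6 # R))"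
  proof -
    have "\<forall>c\<in>set R. control_act (Go_Right q s False) c = (Go_Right q s False, c, MRight)"
      using R by auto
    from sweep_right_segment[where act = control_act and halt = Halt and P = "P @ [6]" and R = "[]",
        OF _ this]
    show ?thesis
      using lP by simp
  qed
  also have "runs \<dots> (length u - 0 + 1)
      (Go_Left q', length (P @ 6 # R) + length u - 1, tape ((P @ 6 # R) @ u))"
    using runs_write_output[OF step', of "Go_Right q s False" 0 "P @ 6 # R"] lP by simp
  also have "runs \<dots> (length (R @ u)) (Go_Left q', i, tape (P @ 6 # R @ u))"
  proof -
    have "\<forall>c\<in>set (R @ u). control_act (Go_Left q') c = (Go_Left q', c, MLeft)"
      using R u by auto
    from sweep_left_segment[where act = control_act and halt = Halt and P = "P @ [6]" and R = "[]",
        OF _ _ this]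
    show ?thesis
      using lP by (simp add: add.assoc)
  qed
  also have "runs \<dots> 1 (Consume q' False, Suc i, tape (P @ 6 # R @ u))"
    using runs_right[where T = "tape (P @ 6 # R @ u)" and p = i] lP tape_at[of P 6 "R @ u"]
    by (simp add: fun_upd_idem)
  finally show ?thesis
    by (rule reaches_cong)
      (use i consumed_tape_split[OF i, of out] consumed_tape_Suc[OF i(1), of w "out @ u"] in
        \<open>simp_all add: P_def R_def s_def\<close>)
qed

lemma runs_reject:
  "runs (Reject, j, tape (7 # replicate j 6 @ R)) (Suc j) (Halt, 1, tape (0 # replicate j 6 @ R))"
proof -
  have "runs (Reject, j, tape (7 # replicate j 6 @ R)) j (Reject, 0, tape (7 # replicate j 6 @ R))"
    using sweep_left_segment[of "[7]" Reject Halt "replicate j 6" control_act R] by fastforce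
  also have "runs \<dots> 1 (Halt, 1, tape (0 # replicate j 6 @ R))"
    using runs_right[where T = "tape (7 # replicate j 6 @ R)" and p = 0]
      tape_update[of "[]" 7 "replicate j 6 @ R" 0]
    by simp
  finally show ?thesis by simp
qed

lemma runs_consume_reject:
  assumes w: "set w \<subseteq> {1, 2, 3, 4}" and i: "1 \<le> i" "i < length w"
    and step: "\<delta> q (w ! i) = None"
  shows "\<exists>T. runs (Consume q False, i, tape (consumed_tape w i out)) (Suc i) (Halt, 1, T) \<and>
    output_on_tape T []"
proof -
  define R where "R = drop (Suc i) w @ 5 # out"
  have s: "w ! i \<in> {1, 2, 3, 4}" using w i nth_mem by blast
  from consumed_tape_split[OF i, of out]
  have "runs (Consume q False, i, tape (consumed_tape w i out)) 1
      (Reject, i - 1, tape (7 # replicate (i - 1) 6 @ 6 # R))"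
    using runs_left[where T = "tape (consumed_tape w i out)" and p = i] s step i
      tape_update[of "7 # replicate (i - 1) 6" "w ! i" R 6] tape_at[of "7 # replicate (i - 1) 6" "w ! i" R]
    by (simp add: R_def)
  also have "runs \<dots> (Suc (i - 1)) (Halt, 1, tape (0 # replicate (i - 1) 6 @ 6 # R))"
    by (rule runs_reject)
  finally show ?thesis
    using i by (intro exI[of _ "tape (0 # replicate (i - 1) 6 @ 6 # R)"]) simp
qed

lemma runs_end_reject:
  assumes "w \<noteq> []" and "q \<noteq> q0"
  shows "\<exists>T. runs (Consume q False, length w, tape (consumed_tape w (length w) out)) (Suc (length w))
    (Halt, 1, T) \<and> output_on_tape T []"
proof -
  have tape_n: "consumed_tape w (length w) out = (7 # replicate (length w - 1) 6) @ 5 # out"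
    by (simp add: consumed_tape_def)
  have "length (7 # replicate (length w - 1) (6::nat)) = length w"
    using assms(1) by simp
  with tape_n have "runs (Consume q False, length w, tape (consumed_tape w (length w) out)) 1
      (Reject, length w - 1, tape (7 # replicate (length w - 1) 6 @ 5 # out))"
    using runs_left[where T = "tape (consumed_tape w (length w) out)" and p = "length w"] assms(2)
      tape_at[of "7 # replicate (length w - 1) 6" 5 out]
    by (simp add: fun_upd_idem)
  also have "runs \<dots> (Suc (length w - 1)) (Halt, 1, tape (0 # replicate (length w - 1) 6 @ 5 # out))"
    by (rule runs_reject)
  finally show ?thesis
    using assms(1) by (intro exI[of _ "tape (0 # replicate (length w - 1) 6 @ 5 # out)"]) simp
qed

lemma runs_end_accept:
  assumes "w \<noteq> []"
  shows "runs (Consume q0 False, length w, tape (consumed_tape w (length w) out)) 1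
    (Seek, Suc (length w), tape (7 # replicate (length w) 6 @ out))"
proof -
  obtain n where n: "length w = Suc n"
    using assms by (cases w) auto
  have "runs (Consume q0 False, Suc n, tape ((7 # replicate n 6) @ 5 # out)) 1
      (Seek, Suc (Suc n), tape ((7 # replicate n 6) @ 6 # out))"
    using runs_right[where T = "tape ((7 # replicate n 6) @ 5 # out)" and p = "Suc n"]
      tape_at[of "7 # replicate n 6" 5 out] tape_update[of "7 # replicate n 6" 5 out 6]
    by simp
  then show ?thesis
    by (simp add: n consumed_tape_def replicate_app_Cons_same)
qed

lemma runs_shift_first:
  assumes "c \<in> {1, 2, 3, 4}"
  shows "runs (Seek, Suc g, tape (7 # replicate g 6 @ c # U)) (2 * g + 3)
    (Seek, Suc (Suc g), tape (c # replicate (Suc g) 6 @ U))"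
proof -
  have sixes_left: "\<forall>x\<in>set (replicate g 6). control_act (Carry c) x = (Carry c, x, MLeft)"
    by simp
  have sixes_right: "\<forall>x\<in>set (replicate g 6 @ [6]). control_act Seek x = (Seek, x, MRight)"
    by simp
  have "runs (Seek, Suc g, tape (7 # replicate g 6 @ c # U)) 1
      (Carry c, g, tape (7 # replicate g 6 @ 6 # U))"
    using runs_left[where T = "tape (7 # replicate g 6 @ c # U)" and p = "Suc g"] assms
      tape_at[of "7 # replicate g 6" c U] tape_update[of "7 # replicate g 6" c U 6]
    by auto
  also have "runs \<dots> g (Carry c, 0, tape (7 # replicate g 6 @ 6 # U))"
    using sweep_left_segment[where act = control_act and halt = Halt and P = "[7]"
        and R = "6 # U", OF _ _ sixes_left]
    by simp
  also have "runs \<dots> 1 (Seek, 1, tape ([c] @ (replicate g 6 @ [6]) @ U))"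
    using runs_right[where T = "tape (7 # replicate g 6 @ 6 # U)" and p = 0]
      tape_update[of "[]" 7 "replicate g 6 @ 6 # U" c]
    by simp
  also have "runs \<dots> (Suc g) (Seek, 1 + Suc g, tape ([c] @ (replicate g 6 @ [6]) @ U))"
    using sweep_right_segment[where act = control_act and halt = Halt and P = "[c]", OF _ sixes_right]
    by simp
  finally show ?thesis
    by (rule reaches_cong) (simp_all add: replicate_app_Cons_same)
qed

lemma runs_shift_next:
  assumes W: "W \<noteq> []" "set W \<subseteq> {1, 2, 3, 4}" and c: "c \<in> {1, 2, 3, 4}"
  shows "runs (Seek, length W + Suc g, tape (W @ replicate (Suc g) 6 @ c # U)) (2 * g + 5)
    (Seek, Suc (length W) + Suc g, tape ((W @ [c]) @ replicate (Suc g) 6 @ U))"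
proof -
  have last_W: "tape (W @ V) (length W - 1) \<in> {1, 2, 3, 4}" for V
    using W by (cases W rule: rev_cases) (auto simp: tape_def nth_append)
  have sixes_left: "\<forall>x\<in>set (replicate (Suc g) 6). control_act (Carry c) x = (Carry c, x, MLeft)"
    by simp
  have sixes_right: "\<forall>x\<in>set (replicate g 6 @ [6]). control_act Seek x = (Seek, x, MRight)"
    by simp
  have "runs (Seek, length W + Suc g, tape ((W @ replicate (Suc g) 6) @ c # U)) 1
      (Carry c, length W - 1 + Suc g, tape ((W @ replicate (Suc g) 6) @ 6 # U))"
    using runs_left[where T = "tape ((W @ replicate (Suc g) 6) @ c # U)" and p = "length W + Suc g"] c W
      tape_at[of "W @ replicate (Suc g) 6" c U] tape_update[of "W @ replicate (Suc g) 6" c U 6]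
    by (cases W) auto
  also have "runs \<dots> (Suc g) (Carry c, length W - 1, tape (W @ replicate (Suc g) 6 @ 6 # U))"
    using sweep_left_segment[where act = control_act and halt = Halt and P = W
        and R = "6 # U", OF W(1) _ sixes_left]
    by simp
  also have "runs \<dots> 1 (Put c, length W, tape (W @ replicate (Suc g) 6 @ 6 # U))"
    using runs_right[where T = "tape (W @ replicate (Suc g) 6 @ 6 # U)" and p = "length W - 1"]
      last_W[of "replicate (Suc g) 6 @ 6 # U"] W(1)
    by (auto simp: fun_upd_idem)
  also have "runs \<dots> 1 (Seek, Suc (length W), tape ((W @ [c]) @ (replicate g 6 @ [6]) @ U))"
    using runs_right[where T = "tape (W @ replicate (Suc g) 6 @ 6 # U)" and p = "length W"]
      tape_update[of W 6 "replicate g 6 @ 6 # U" c]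
    by (simp add: replicate_app_Cons_same)
  also have "runs \<dots> (Suc g)
      (Seek, Suc (length W) + Suc g, tape ((W @ [c]) @ (replicate g 6 @ [6]) @ U))"
    using sweep_right_segment[where act = control_act and halt = Halt and P = "W @ [c]",
        OF _ sixes_right]
    by simp
  finally show ?thesis
    by (rule reaches_cong) (simp_all add: replicate_app_Cons_same)
qed

lemma runs_finish_empty:
  "\<exists>T. runs (Seek, Suc g, tape (7 # replicate g 6)) (g + 2) (Halt, 1, T) \<and> output_on_tape T []"
proof -
  have sixes_left: "\<forall>x\<in>set (replicate g 6). control_act Finish x = (Finish, x, MLeft)"
    by simp
  have "runs (Seek, Suc g, tape (7 # replicate g 6)) 1 (Finish, g, tape (7 # replicate g 6 @ []))"
    using runs_left[where T = "tape (7 # replicate g 6)" and p = "Suc g"]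
    by (simp add: tape_beyond tape_update_beyond)
  also have "runs \<dots> g (Finish, 0, tape (7 # replicate g 6 @ []))"
    using sweep_left_segment[where act = control_act and halt = Halt and P = "[7]" and R = "[]",
        OF _ _ sixes_left]
    by simp
  also have "runs \<dots> 1 (Halt, 1, tape (0 # replicate g 6))"
    using runs_right[where T = "tape (7 # replicate g 6 @ [])" and p = 0]
      tape_update[of "[]" 7 "replicate g 6" 0]
    by simp
  finally show ?thesis
    by (intro exI[of _ "tape (0 # replicate g 6)"]) simp
qed

lemma runs_finish:
  assumes W: "W \<noteq> []" "set W \<subseteq> {1, 2, 3, 4}"
  shows "\<exists>T. runs (Seek, length W + Suc g, tape (W @ replicate (Suc g) 6)) (g + 4)
    (Halt, Suc (length W), T) \<and> output_on_tape T W"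
proof -
  have last_W: "tape (W @ V) (length W - 1) \<in> {1, 2, 3, 4}" for V
    using W by (cases W rule: rev_cases) (auto simp: tape_def nth_append)
  have sixes_left: "\<forall>x\<in>set (replicate (Suc g) 6). control_act Finish x = (Finish, x, MLeft)"
    by simp
  have "runs (Seek, length W + Suc g, tape (W @ replicate (Suc g) 6)) 1
      (Finish, length W - 1 + Suc g, tape (W @ replicate (Suc g) 6 @ []))"
    using runs_left[where T = "tape (W @ replicate (Suc g) 6)" and p = "length W + Suc g"] W(1)
    by (cases W) (simp_all add: tape_beyond tape_update_beyond)
  also have "runs \<dots> (Suc g) (Finish, length W - 1, tape (W @ replicate (Suc g) 6 @ []))"
    using sweep_left_segment[where act = control_act and halt = Halt and P = W and R = "[]",
        OF W(1) _ sixes_left]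
    by simp
  also have "runs \<dots> 1 (Terminate, length W, tape (W @ 6 # replicate g 6))"
    using runs_right[where T = "tape (W @ replicate (Suc g) 6 @ [])" and p = "length W - 1"]
      last_W[of "replicate (Suc g) 6 @ []"] W(1)
    by (auto simp: fun_upd_idem)
  also have "runs \<dots> 1 (Halt, Suc (length W), tape (W @ 0 # replicate g 6))"
    using runs_right[where T = "tape (W @ 6 # replicate g 6)" and p = "length W"]
      tape_update[of W 6 "replicate g 6" 0]
    by simp
  finally have "runs (Seek, length W + Suc g, tape (W @ replicate (Suc g) 6)) (g + 4)
      (Halt, Suc (length W), tape (W @ 0 # replicate g 6))"
    by (rule reaches_cong) simp_all
  moreover have "output_on_tape (tape (W @ 0 # replicate g 6)) W"
    by (simp add: output_on_tape_def tape_def nth_append)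
  ultimately show ?thesis
    by blast
qed

lemma runs_shift_step:
  assumes "set W \<subseteq> {1, 2, 3, 4}" and "c \<in> {1, 2, 3, 4}"
  shows "\<exists>t \<le> 2 * g + 5. runs (Seek, length W + Suc g, tape (shifted_tape W g (c # U))) t
    (Seek, length (W @ [c]) + Suc g, tape (shifted_tape (W @ [c]) g U))"
proof (cases "W = []")
  case True
  with runs_shift_first[OF assms(2), of g U] show ?thesis
    by (intro exI[of _ "2 * g + 3"]) (simp add: shifted_tape_def)
next
  case False
  with runs_shift_next[OF False assms, of g U] show ?thesis
    by (intro exI[of _ "2 * g + 5"]) (simp add: shifted_tape_def)
qed

lemma runs_shift:
  assumes "set W \<subseteq> {1, 2, 3, 4}" and "set U \<subseteq> {1, 2, 3, 4}"
  shows "\<exists>t \<le> (length U + 1) * (2 * g + 5). \<exists>p T.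
    runs (Seek, length W + Suc g, tape (shifted_tape W g U)) t (Halt, p, T) \<and>
    output_on_tape T (W @ U)"
  using assms
proof (induction U arbitrary: W)
  case Nil
  show ?case
  proof (cases "W = []")
    case True
    with runs_finish_empty[of g] show ?thesis
      by (intro exI[of _ "g + 2"]) (auto simp: shifted_tape_def)
  next
    case False
    with runs_finish[OF False Nil.prems(1), of g] show ?thesis
      by (intro exI[of _ "g + 4"]) (auto simp: shifted_tape_def)
  qed
next
  case (Cons c U)
  then have c: "c \<in> {1, 2, 3, 4}" and W': "set (W @ [c]) \<subseteq> {1, 2, 3, 4}" and U: "set U \<subseteq> {1, 2, 3, 4}"
    by auto
  obtain t0 where t0: "t0 \<le> 2 * g + 5"
    and run0: "runs (Seek, length W + Suc g, tape (shifted_tape W g (c # U))) t0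
      (Seek, length (W @ [c]) + Suc g, tape (shifted_tape (W @ [c]) g U))"
    using runs_shift_step[OF Cons.prems(1) c] by blast
  obtain t p T where t: "t \<le> (length U + 1) * (2 * g + 5)"
    and run: "runs (Seek, length (W @ [c]) + Suc g, tape (shifted_tape (W @ [c]) g U)) t (Halt, p, T)"
    and out: "output_on_tape T ((W @ [c]) @ U)"
    using Cons.IH[OF W' U] by blast
  from reaches_trans[OF run0 run] out t0 t show ?case
    by (intro exI[of _ "t0 + t"]) auto
qed

lemma transducer_run_output:
  "transducer_run \<delta> q w = Some (q', u) \<Longrightarrow> set u \<subseteq> {1, 2, 3, 4} \<and> length u \<le> B * length w"
proof (induction w arbitrary: q u)
  case (Cons c w)
  then obtain q1 u1 u2 where "\<delta> q c = Some (q1, u1)" "transducer_run \<delta> q1 w = Some (q', u2)"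
    "u = u1 @ u2"
    unfolding transducer_run_Cons_eq_Some by blast
  with Cons.IH step_output show ?case by fastforce
qed simp

lemma transducer_fun_output: "set (transducer_fun \<delta> q0 w) \<subseteq> {1, 2, 3, 4}"
proof (cases "transducer_run \<delta> q0 w")
  case (Some r)
  then obtain q u where "transducer_run \<delta> q0 w = Some (q, u)" by (cases r) auto
  with transducer_run_output[OF this] show ?thesis
    by (auto simp: transducer_fun_def)
qed (simp add: transducer_fun_def)

definition step_cost :: "nat \<Rightarrow> nat" where
  "step_cost n = 2 * (n + B * n) + 3"

definition shift_cost :: "nat \<Rightarrow> nat" where
  "shift_cost n = (B * n + 1) * (2 * n + 5) + n + 1"

lemma runs_consume_end:
  assumes w: "w \<noteq> []" and run: "transducer_run \<delta> q0 w = Some (q, out)"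
  shows "\<exists>t \<le> shift_cost (length w). \<exists>p T.
    runs (Consume q False, length w, tape (consumed_tape w (length w) out)) t (Halt, p, T) \<and>
    output_on_tape T (transducer_fun \<delta> q0 w)"
proof (cases "q = q0")
  case True
  from run transducer_run_output have out: "set out \<subseteq> {1, 2, 3, 4}" "length out \<le> B * length w"
    by blast+
  obtain t p T where t: "t \<le> (length out + 1) * (2 * length w + 5)"
    and shift: "runs (Seek, length [] + Suc (length w), tape (shifted_tape [] (length w) out)) t
      (Halt, p, T)"
    and T: "output_on_tape T ([] @ out)"
    using runs_shift[of "[]" out "length w"] out(1) by auto
  from shift have "runs (Seek, Suc (length w), tape (7 # replicate (length w) 6 @ out)) t (Halt, p, T)"
    by (simp add: shifted_tape_def)
  with runs_end_accept[OF w, of out] True have accept: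
    "runs (Consume q False, length w, tape (consumed_tape w (length w) out)) (1 + t) (Halt, p, T)"
    by (blast intro: reaches_trans)
  have "(length out + 1) * (2 * length w + 5) \<le> (B * length w + 1) * (2 * length w + 5)"
    using out(2) by simp
  with t have "1 + t \<le> shift_cost (length w)"
    unfolding shift_cost_def by linarith
  moreover have "transducer_fun \<delta> q0 w = out"
    using run True by (simp add: transducer_fun_def)
  ultimately show ?thesis
    using accept T by auto
next
  case False
  with runs_end_reject[OF w False, of out] obtain T where
    "runs (Consume q False, length w, tape (consumed_tape w (length w) out)) (Suc (length w))
      (Halt, 1, T)" "output_on_tape T []"
    by blast
  moreover have "Suc (length w) \<le> shift_cost (length w)"
    by (simp add: shift_cost_def)
  moreover have "transducer_fun \<delta> q0 w = []"
    using run False by (simp add: transducer_fun_def)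
  ultimately show ?thesis
    by auto
qed

lemma runs_consume_step:
  assumes w: "set w \<subseteq> {1, 2, 3, 4}" and i: "1 \<le> i" "i < length w"
    and run: "transducer_run \<delta> q0 (take i w) = Some (q, out)"
    and step: "\<delta> q (w ! i) = Some (q', u)"
  shows "transducer_run \<delta> q0 (take (Suc i) w) = Some (q', out @ u) \<and>
    (\<exists>t \<le> step_cost (length w). runs (Consume q False, i, tape (consumed_tape w i out)) t
      (Consume q' False, Suc i, tape (consumed_tape w (Suc i) (out @ u))))"
proof
  show run': "transducer_run \<delta> q0 (take (Suc i) w) = Some (q', out @ u)"
    using run step i by (simp add: take_Suc_conv_app_nth transducer_run_append)
  have "length (out @ u) \<le> B * length (take (Suc i) w)"
    using transducer_run_output[OF run'] by blast
  also have "\<dots> \<le> B * length w" by simp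
  finally have "2 * length w + 2 * length out + 2 * length u + 3 - 2 * i \<le> step_cost (length w)"
    by (simp add: step_cost_def)
  moreover have "set out \<subseteq> {1, 2, 3, 4}"
    using transducer_run_output[OF run] by blast
  note runs_consume_next[OF w i step this]
  ultimately show "\<exists>t \<le> step_cost (length w). runs (Consume q False, i, tape (consumed_tape w i out)) t
      (Consume q' False, Suc i, tape (consumed_tape w (Suc i) (out @ u)))"
    by blast
qed

lemma runs_consume_phase:
  assumes w: "set w \<subseteq> {1, 2, 3, 4}" "w \<noteq> []"
    and i: "1 \<le> i" "i \<le> length w" and run: "transducer_run \<delta> q0 (take i w) = Some (q, out)"
  shows "\<exists>t \<le> (length w - i) * step_cost (length w) + shift_cost (length w). \<exists>p T.
    runs (Consume q False, i, tape (consumed_tape w i out)) t (Halt, p, T) \<and>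
    output_on_tape T (transducer_fun \<delta> q0 w)"
  using i run
proof (induction "length w - i" arbitrary: i q out)
  case 0
  then have "i = length w" by simp
  with "0.prems"(3) runs_consume_end[OF w(2)] show ?case
    by simp
next
  case (Suc d)
  then have i: "1 \<le> i" "i < length w" by simp_all
  show ?case
  proof (cases "\<delta> q (w ! i)")
    case None
    have "Suc i \<le> (length w - i) * step_cost (length w) + shift_cost (length w)"
      using i by (simp add: shift_cost_def)
    with runs_consume_reject[OF w(1) i None, of out]
      transducer_fun_if_prefix_stuck[OF Suc.prems(3) i(2) None]
    show ?thesis
      by auto
  next
    case (Some r)
    then obtain q' u where step: "\<delta> q (w ! i) = Some (q', u)" by (cases r) auto
    obtain t0 where run': "transducer_run \<delta> q0 (take (Suc i) w) = Some (q', out @ u)"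
      and t0: "t0 \<le> step_cost (length w)"
      and run0: "runs (Consume q False, i, tape (consumed_tape w i out)) t0
        (Consume q' False, Suc i, tape (consumed_tape w (Suc i) (out @ u)))"
      using runs_consume_step[OF w(1) i Suc.prems(3) step] by blast
    have "d = length w - Suc i" "1 \<le> Suc i" "Suc i \<le> length w"
      using Suc.hyps(2) i by simp_all
    then obtain t p T where
      t: "t \<le> (length w - Suc i) * step_cost (length w) + shift_cost (length w)"
      and run1: "runs (Consume q' False, Suc i, tape (consumed_tape w (Suc i) (out @ u))) t (Halt, p, T)"
      and T: "output_on_tape T (transducer_fun \<delta> q0 w)"
      using Suc.hyps(1)[OF _ _ _ run'] by blast
    have "(length w - i) * step_cost (length w) =
        step_cost (length w) + (length w - Suc i) * step_cost (length w)"
      using i by (metis Suc_diff_Suc mult_Suc)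
    with t0 t have "t0 + t \<le> (length w - i) * step_cost (length w) + shift_cost (length w)"
      by linarith
    with reaches_trans[OF run0 run1] T show ?thesis
      by blast
  qed
qed

lemma total_cost_le: "n * step_cost n + shift_cost n \<le> (5 * B + 6) * (n + 1) ^ 2"
proof -
  have "n * step_cost n + shift_cost n = (4 * B + 2) * (n * n) + (5 * B + 6) * n + 6"
    by (simp add: step_cost_def shift_cost_def algebra_simps)
  also have "\<dots> \<le> (5 * B + 6) * (n * n) + (10 * B + 12) * n + (5 * B + 6)"
    by (intro add_mono mult_le_mono1) simp_all
  also have "\<dots> = (5 * B + 6) * (n + 1) ^ 2"
    by (simp add: algebra_simps power2_eq_square)
  finally show ?thesis .
qed

lemma runs_transducer_fun:
  assumes w: "set w \<subseteq> {1, 2, 3, 4}"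
  shows "\<exists>t \<le> (5 * B + 6) * (length w + 1) ^ 2. \<exists>p T.
    runs (Consume q0 True, 0, tape w) t (Halt, p, T) \<and> output_on_tape T (transducer_fun \<delta> q0 w)"
proof (cases "w \<noteq> [] \<and> \<delta> q0 (hd w) \<noteq> None")
  case True
  then obtain q' u where "w \<noteq> []" and step: "\<delta> q0 (hd w) = Some (q', u)"
    by auto
  then have run1: "transducer_run \<delta> q0 (take 1 w) = Some (q', u)"
    by (cases w) auto
  have "length u \<le> B * length w"
    using step_output[OF step] \<open>w \<noteq> []\<close> by (cases w) auto
  then have t0: "2 * length w + 2 * length u + 3 \<le> step_cost (length w)"
    by (simp add: step_cost_def)
  obtain t p T where
    t: "t \<le> (length w - 1) * step_cost (length w) + shift_cost (length w)"
    and run: "runs (Consume q' False, 1, tape (consumed_tape w 1 u)) t (Halt, p, T)"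
    and T: "output_on_tape T (transducer_fun \<delta> q0 w)"
    using runs_consume_phase[OF w \<open>w \<noteq> []\<close> _ _ run1] \<open>w \<noteq> []\<close> by (cases w) auto
  have "length w * step_cost (length w) = step_cost (length w) + (length w - 1) * step_cost (length w)"
    using \<open>w \<noteq> []\<close> by (cases w) auto
  with t0 t total_cost_le[of "length w"]
  have "2 * length w + 2 * length u + 3 + t \<le> (5 * B + 6) * (length w + 1) ^ 2"
    by linarith
  with reaches_trans[OF runs_consume_first[OF w \<open>w \<noteq> []\<close> step] run] T show ?thesis
    by blast
next
  case False
  then have "control_act (Consume q0 True) (tape w 0) = (Halt, 0, MRight)"
    by (cases w) (auto simp: tape_def)
  then have "runs (Consume q0 True, 0, tape w) 1 (Halt, 1, (tape w)(0 := 0))"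
    using runs_right[where T = "tape w" and p = 0] by simp
  moreover have "transducer_fun \<delta> q0 w = []"
    using False by (cases w) (auto simp: transducer_fun_def split: option.split)
  ultimately show ?thesis
    by (intro exI[of _ 1]) auto
qed

theorem poly_time_computable_transducer_fun: "poly_time_computable (transducer_fun \<delta> q0)"
proof (rule poly_time_computable_if_reaches)
  show "0 \<notin> set (transducer_fun \<delta> q0 w)" for w
    using transducer_fun_output[of w] by auto
qed (rule runs_transducer_fun)

end

section \<open>A transducer computing the reduction on encodings\<close>

text \<open>\<open>Rel_Prefix r\<close>: the digits of the relation symbol read so far denote \<open>r\<close>;
  \<open>Entry r i started\<close>: reading the \<open>i\<close>-th entry of a fact over \<open>r\<close>, where \<open>started\<close>
  records whether its digits have begun.\<close>

datatype fact_state = Fact_Start | Rel_Prefix nat | Entry nat nat bool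

instance fact_state :: countable
  by countable_datatype

context sjf_reduction
begin

text \<open>Reading \<open>enc_fact f\<close>, the transducer writes \<open>enc_fact (tag_fact f)\<close>: the relation
  symbol (\<open>1\<close> or \<open>2\<close>, with binary representation \<open>[2]\<close> or \<open>[2, 1]\<close>) becomes
  \<open>relR = 0\<close>, and the digits of the \<open>i\<close>-th entry are prefixed by \<open>tag m (vars r ! i)\<close>.\<close>

fun fact_step :: "fact_state \<Rightarrow> nat \<Rightarrow> (fact_state \<times> nat list) option" where
  "fact_step Fact_Start c = (if c = 2 then Some (Rel_Prefix 1, []) else None)"
| "fact_step (Rel_Prefix r) c =
     (if c = 3 then Some (Entry r 0 False, [3])
      else if c = 1 \<and> r = 1 then Some (Rel_Prefix 2, []) else None)"
| "fact_step (Entry r i started) c =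
     (if i < k then
        (if c = 3
         then Some (Entry r (Suc i) False, (if started then [] else tag m (vars r ! i)) @ [3])
         else if c = 2
         then Some (Entry r i True, (if started then [] else tag m (vars r ! i)) @ [2])
         else if c = 1 \<and> started then Some (Entry r i True, [1])
         else None)
      else if c = 4 then Some (Fact_Start, [4]) else None)"

abbreviation run :: "fact_state \<Rightarrow> nat list \<Rightarrow> (fact_state \<times> nat list) option" where
  "run \<equiv> transducer_run fact_step"

lemma run_digits:
  "set bs \<subseteq> {1, 2} \<Longrightarrow> i < k \<Longrightarrow>
    run (Entry r i True) (bs @ [3]) = Some (Entry r (Suc i) False, bs @ [3])"
proof (induction bs)
  case (Cons b bs)
  then have "b = 1 \<or> b = 2" by auto
  with Cons show ?case by auto
qed simp

lemma run_entry:
  assumes "i < k"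
  shows "run (Entry r i False) (enc_nat a) =
    Some (Entry r (Suc i) False, enc_nat (pair_code m a (vars r ! i)))"
proof (cases a)
  case 0
  with assms show ?thesis by (simp add: enc_nat_pair_code)
next
  case (Suc n)
  then obtain bs where bs: "bin a = 2 # bs" using bin_pos_Cons by blast
  with set_bin[of a] have "set bs \<subseteq> {1, 2}" by simp
  with assms bs show ?thesis by (simp add: enc_nat_def bin_pair_code run_digits)
qed

lemma run_entries:
  "i + length as \<le> k \<Longrightarrow>
    run (Entry r i False) (concat (map enc_nat as)) =
      Some (Entry r (i + length as) False,
            concat (map enc_nat (map2 (pair_code m) as (drop i (vars r)))))"
proof (induction as arbitrary: i)
  case (Cons a as)
  then have "i < k" by simp
  then have "drop i (vars r) = vars r ! i # drop (Suc i) (vars r)"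
    by (simp add: Cons_nth_drop_Suc)
  with Cons run_entry[OF \<open>i < k\<close>] show ?case
    by (simp add: transducer_run_appendI)
qed simp

lemma run_fact:
  assumes "fact_over {relR1, relR2} k f"
  shows "run Fact_Start (enc_fact f) = Some (Fact_Start, enc_fact (tag_fact f))"
proof -
  obtain S as where f: "f = (S, as)" and S: "S = 1 \<or> S = 2" and as: "length as = k"
    using assms by (cases f) (auto simp: fact_over_def)
  have "run Fact_Start (enc_nat S) = Some (Entry S 0 False, [3])"
    using S by (auto simp: enc_nat_def bin_pos)
  moreover have "run (Entry S 0 False) (concat (map enc_nat as)) =
      Some (Entry S k False, concat (map enc_nat (map2 (pair_code m) as (vars S))))"
    using run_entries[of 0 as] as by simp
  moreover have "run (Entry S k False) [4] = Some (Fact_Start, [4])"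
    by simp
  ultimately show ?thesis
    by (simp add: f enc_fact_def tag_fact_def transducer_run_appendI)
qed

lemma run_db:
  "\<forall>f\<in>set fs. fact_over {relR1, relR2} k f \<Longrightarrow>
    run Fact_Start (enc_db fs) = Some (Fact_Start, enc_db (map tag_fact fs))"
proof (induction fs)
  case (Cons f fs)
  then show ?case
    using transducer_run_appendI[OF run_fact] by (simp add: enc_db_def)
qed (simp add: enc_db_def)

lemma run_digits_inv:
  assumes "run (Entry r i True) w = Some (Fact_Start, u)" and "i < k"
  shows "\<exists>bs rest u'. set bs \<subseteq> {1, 2} \<and> w = bs @ 3 # rest \<and> u = bs @ 3 # u' \<and>
    run (Entry r (Suc i) False) rest = Some (Fact_Start, u')"
  using assms(1)
proof (induction w arbitrary: u)
  case (Cons c w)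
  then obtain q' u1 u2 where step: "fact_step (Entry r i True) c = Some (q', u1)"
    and rest: "run q' w = Some (Fact_Start, u2)" and u: "u = u1 @ u2"
    unfolding transducer_run_Cons_eq_Some by blast
  show ?case
  proof (cases "c = 3")
    case True
    with step assms(2) have "q' = Entry r (Suc i) False" "u1 = [3]" by auto
    with True rest u show ?thesis by (intro exI[of _ "[]"] exI[of _ w] exI[of _ u2]) simp
  next
    case False
    with step assms(2) have c: "c \<in> {1, 2}" and "q' = Entry r i True" "u1 = [c]"
      by (auto split: if_splits)
    with Cons.IH rest obtain bs rest' u' where "set bs \<subseteq> {1, 2}" "w = bs @ 3 # rest'"
      "u2 = bs @ 3 # u'" "run (Entry r (Suc i) False) rest' = Some (Fact_Start, u')"
      by blast
    with c u \<open>u1 = [c]\<close> show ?thesis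
      by (intro exI[of _ "c # bs"] exI[of _ rest'] exI[of _ u']) auto
  qed
qed simp

lemma run_entry_inv:
  assumes "run (Entry r i False) w = Some (Fact_Start, u)" and "i < k"
  shows "\<exists>a rest u'. w = enc_nat a @ rest \<and> u = enc_nat (pair_code m a (vars r ! i)) @ u' \<and>
    run (Entry r (Suc i) False) rest = Some (Fact_Start, u')"
proof -
  obtain c w' where w: "w = c # w'"
    using assms(1) by (cases w) auto
  from assms(1) obtain q' u1 u2 where step: "fact_step (Entry r i False) c = Some (q', u1)"
    and rest: "run q' w' = Some (Fact_Start, u2)" and u: "u = u1 @ u2"
    unfolding w transducer_run_Cons_eq_Some by blast
  consider "c = 3" | "c = 2"
    using step assms(2) by (auto split: if_splits)
  then show ?thesis
  proof cases
    case 1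
    with step assms(2) have "q' = Entry r (Suc i) False" "u1 = tag m (vars r ! i) @ [3]"
      by auto
    with 1 w rest u show ?thesis
      by (intro exI[of _ 0]) (simp add: enc_nat_pair_code)
  next
    case 2
    with step assms(2) have "q' = Entry r i True" "u1 = tag m (vars r ! i) @ [2]"
      by auto
    with rest run_digits_inv assms(2) obtain bs rest' u' where bs: "set bs \<subseteq> {1, 2}"
      and "w' = bs @ 3 # rest'" "u2 = bs @ 3 # u'"
      and "run (Entry r (Suc i) False) rest' = Some (Fact_Start, u')"
      by blast
    moreover have "bin (nat_of_bits (2 # bs)) = 2 # bs"
      using bs by (intro bin_nat_of_bits) (simp add: canonical_bits_def)
    ultimately show ?thesis
      using 2 w u \<open>u1 = tag m (vars r ! i) @ [2]\<close>
      by (intro exI[of _ "nat_of_bits (2 # bs)"]) (simp add: enc_nat_def bin_pair_code)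
  qed
qed

lemma run_entries_inv:
  assumes "run (Entry r i False) w = Some (Fact_Start, u)" and "i \<le> k"
  shows "\<exists>as rest u'. length as = k - i \<and> w = concat (map enc_nat as) @ 4 # rest \<and>
    u = concat (map enc_nat (map2 (pair_code m) as (drop i (vars r)))) @ 4 # u' \<and>
    run Fact_Start rest = Some (Fact_Start, u')"
  using assms
proof (induction "k - i" arbitrary: i w u)
  case 0
  then have "i = k" by simp
  obtain c w' where w: "w = c # w'"
    using "0.prems"(1) by (cases w) auto
  from "0.prems"(1) obtain q' u1 u2 where step: "fact_step (Entry r i False) c = Some (q', u1)"
    and rest: "run q' w' = Some (Fact_Start, u2)" and u: "u = u1 @ u2"
    unfolding w transducer_run_Cons_eq_Some by blast
  from step \<open>i = k\<close> have "c = 4" "q' = Fact_Start" "u1 = [4]"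
    by (auto split: if_splits)
  with w rest u \<open>i = k\<close> show ?case
    by (intro exI[of _ "[]"] exI[of _ w'] exI[of _ u2]) simp
next
  case (Suc d)
  then have "i < k" by simp
  from run_entry_inv[OF Suc.prems(1) this] obtain a rest u' where
    a: "w = enc_nat a @ rest" "u = enc_nat (pair_code m a (vars r ! i)) @ u'"
    and rest: "run (Entry r (Suc i) False) rest = Some (Fact_Start, u')"
    by blast
  have "d = k - Suc i"
    using Suc.hyps(2) by simp
  from Suc.hyps(1)[OF this rest Suc_leI[OF \<open>i < k\<close>]] obtain as rest' u'' where
    "length as = k - Suc i" "rest = concat (map enc_nat as) @ 4 # rest'"
    "u' = concat (map enc_nat (map2 (pair_code m) as (drop (Suc i) (vars r)))) @ 4 # u''"
    "run Fact_Start rest' = Some (Fact_Start, u'')"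
    by blast
  moreover have "drop i (vars r) = vars r ! i # drop (Suc i) (vars r)"
    using \<open>i < k\<close> by (simp add: Cons_nth_drop_Suc)
  ultimately show ?case
    using a \<open>i < k\<close> by (intro exI[of _ "a # as"] exI[of _ rest'] exI[of _ u'']) auto
qed

lemma run_relation_inv:
  assumes "run Fact_Start w = Some (Fact_Start, u)" and "w \<noteq> []"
  shows "\<exists>S w' u'. S \<in> {1, 2} \<and> w = enc_nat S @ w' \<and> u = 3 # u' \<and>
    run (Entry S 0 False) w' = Some (Fact_Start, u')"
proof -
  obtain c1 w1 where w: "w = c1 # w1"
    using assms(2) by (cases w) auto
  with assms(1) have "c1 = 2" and run1: "run (Rel_Prefix 1) w1 = Some (Fact_Start, u)"
    by (auto split: if_splits option.splits)
  obtain c2 w2 where w1: "w1 = c2 # w2"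
    using run1 by (cases w1) auto
  from run1 obtain q' u1 u2 where step: "fact_step (Rel_Prefix 1) c2 = Some (q', u1)"
    and rest: "run q' w2 = Some (Fact_Start, u2)" and u: "u = u1 @ u2"
    unfolding w1 transducer_run_Cons_eq_Some by blast
  consider "c2 = 3" | "c2 = 1"
    using step by (auto split: if_splits)
  then show ?thesis
  proof cases
    case 1
    with step have "q' = Entry 1 0 False" "u1 = [3]" by auto
    with 1 w w1 rest u \<open>c1 = 2\<close> show ?thesis
      by (intro exI[of _ 1]) (simp add: enc_nat_def bin_pos)
  next
    case 2
    with step have "q' = Rel_Prefix 2" "u1 = []" by auto
    with rest obtain c3 w3 where w2: "w2 = c3 # w3" by (cases w2) auto
    with rest \<open>q' = Rel_Prefix 2\<close> have "c3 = 3" and "run (Entry 2 0 False) w3 = Some (Fact_Start, tl u2)"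
      and "u2 = 3 # tl u2"
      by (auto split: if_splits option.splits)
    with 2 w w1 w2 u \<open>u1 = []\<close> \<open>c1 = 2\<close> show ?thesis
      by (intro exI[of _ 2]) (simp add: enc_nat_def bin_pos numeral_2_eq_2)
  qed
qed

lemma run_fact_inv:
  assumes "run Fact_Start w = Some (Fact_Start, u)" and "w \<noteq> []"
  shows "\<exists>f rest u'. fact_over {relR1, relR2} k f \<and> w = enc_fact f @ rest \<and>
    u = enc_fact (tag_fact f) @ u' \<and> run Fact_Start rest = Some (Fact_Start, u')"
proof -
  from run_relation_inv[OF assms] obtain S w' u' where S: "S \<in> {1, 2}"
    and w: "w = enc_nat S @ w'" and u: "u = 3 # u'"
    and rest: "run (Entry S 0 False) w' = Some (Fact_Start, u')"
    by blast
  from run_entries_inv[OF rest] obtain as rest' u'' where "length as = k"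
    "w' = concat (map enc_nat as) @ 4 # rest'"
    "u' = concat (map enc_nat (map2 (pair_code m) as (vars S))) @ 4 # u''"
    "run Fact_Start rest' = Some (Fact_Start, u'')"
    by auto
  with S w u show ?thesis
    by (intro exI[of _ "(S, as)"] exI[of _ rest'] exI[of _ u''])
      (auto simp: fact_over_def enc_fact_def tag_fact_def)
qed

lemma run_db_inv:
  "run Fact_Start w = Some (Fact_Start, u) \<Longrightarrow>
    \<exists>fs. (\<forall>f\<in>set fs. fact_over {relR1, relR2} k f) \<and> w = enc_db fs \<and> u = enc_db (map tag_fact fs)"
proof (induction "length w" arbitrary: w u rule: less_induct)
  case less
  show ?case
  proof (cases "w = []")
    case True
    with less.prems show ?thesis
      by (intro exI[of _ "[]"]) (simp add: enc_db_def)
  next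
    case False
    from run_fact_inv[OF less.prems False] obtain f rest u' where
      f: "fact_over {relR1, relR2} k f" "w = enc_fact f @ rest" "u = enc_fact (tag_fact f) @ u'"
      and rest: "run Fact_Start rest = Some (Fact_Start, u')"
      by blast
    have "length rest < length w"
      using f(2) by (simp add: enc_fact_def)
    from less.hyps[OF this rest] obtain fs where
      "\<forall>f\<in>set fs. fact_over {relR1, relR2} k f" "rest = enc_db fs" "u' = enc_db (map tag_fact fs)"
      by blast
    with f show ?thesis
      by (intro exI[of _ "f # fs"]) (simp add: enc_db_def)
  qed
qed

lemma tagged_db_in_certain_lang_iff:
  assumes over: "\<forall>f\<in>set fs. fact_over {relR1, relR2} k f"
  shows "enc_db (map tag_fact fs) \<in> certain_lang {relR} k l (sat2 (relR, xs) (relR, ys)) \<longleftrightarrow>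
    enc_db fs \<in> certain_lang {relR1, relR2} k l (sat2 (relR1, xs) (relR2, ys))"
proof -
  have "distinct (map tag_fact fs) \<longleftrightarrow> distinct fs"
    using key_preserving_tag_fact[OF over] by (simp add: distinct_map key_preserving_def)
  moreover have "db_over {relR} k (set (map tag_fact fs))"
    using over by (auto simp: db_over_iff fact_over_def tag_fact_def)
  moreover have "db_over {relR1, relR2} k (set fs)"
    using over by (simp add: db_over_iff)
  ultimately show ?thesis
    using certain_tag_fact_image[OF over] by (simp add: enc_db_in_certain_lang_iff)
qed

lemma transducer_fun_fact_step_iff:
  "w \<in> certain_lang {relR1, relR2} k l (sat2 (relR1, xs) (relR2, ys)) \<longleftrightarrow>
    transducer_fun fact_step Fact_Start w \<in> certain_lang {relR} k l (sat2 (relR, xs) (relR, ys))"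
proof
  assume w: "w \<in> certain_lang {relR1, relR2} k l (sat2 (relR1, xs) (relR2, ys))"
  then obtain fs where "w = enc_db fs" and over: "\<forall>f\<in>set fs. fact_over {relR1, relR2} k f"
    by (auto simp: certain_lang_def db_over_iff)
  with w run_db[OF over] tagged_db_in_certain_lang_iff[OF over]
  show "transducer_fun fact_step Fact_Start w \<in> certain_lang {relR} k l (sat2 (relR, xs) (relR, ys))"
    by (simp add: transducer_fun_def)
next
  assume image: "transducer_fun fact_step Fact_Start w \<in>
    certain_lang {relR} k l (sat2 (relR, xs) (relR, ys))"
  then have "transducer_fun fact_step Fact_Start w \<noteq> []"
    using Nil_notin_certain_lang by metis
  then have "run Fact_Start w = Some (Fact_Start, transducer_fun fact_step Fact_Start w)"
    by (rule transducer_run_if_transducer_fun)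
  from run_db_inv[OF this] obtain fs where over: "\<forall>f\<in>set fs. fact_over {relR1, relR2} k f"
    and "w = enc_db fs" and "transducer_fun fact_step Fact_Start w = enc_db (map tag_fact fs)"
    by blast
  with image tagged_db_in_certain_lang_iff[OF over]
  show "w \<in> certain_lang {relR1, relR2} k l (sat2 (relR1, xs) (relR2, ys))"
    by simp
qed

definition fact_states :: "fact_state set" where
  "fact_states = {Fact_Start, Rel_Prefix 1, Rel_Prefix 2} \<union>
     (\<lambda>(r, i, started). Entry r i started) ` ({1, 2} \<times> {..k} \<times> UNIV)"

lemma in_fact_states_iff [simp]:
  "Fact_Start \<in> fact_states"
  "Rel_Prefix r \<in> fact_states \<longleftrightarrow> r \<in> {1, 2}"
  "Entry r i started \<in> fact_states \<longleftrightarrow> r \<in> {1, 2} \<and> i \<le> k"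
  by (auto simp: fact_states_def image_iff)

lemma bounded_transducer_fact_step: "bounded_transducer fact_step Fact_Start fact_states (m + 2)"
proof
  show "finite fact_states"
    by (simp add: fact_states_def)
  show "q' \<in> fact_states" if "q \<in> fact_states" and "fact_step q c = Some (q', u)" for q c q' u
    using that by (cases "(q, c)" rule: fact_step.cases) (auto split: if_splits)
  show "set u \<subseteq> {1, 2, 3, 4} \<and> length u \<le> m + 2" if "fact_step q c = Some (q', u)" for q c q' u
  proof -
    have "set (tag m v) \<subseteq> {1, 2, 3, 4}" and "length (tag m v) = m + 1" for v
      using set_fixed_bits[of m v] by (auto simp: tag_def)
    with that show ?thesis
      by (cases "(q, c)" rule: fact_step.cases) (fastforce split: if_splits)+
  qed
qed simp

end

theorem proposition4p1:
  fixes k l :: nat and xs ys :: "nat list"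
  assumes "1 \<le> k" and "l \<le> k"
    and "length xs = k" and "length ys = k"
    and "standing_assumption k l xs ys"
  shows "poly_reduces
           (certain_lang {relR1, relR2} k l (sat2 (relR1, xs) (relR2, ys)))
           (certain_lang {relR} k l (sat2 (relR, xs) (relR, ys)))"
proof -
  define m where "m = sum_list xs + sum_list ys"
  have "\<forall>v \<in> set xs \<union> set ys. v < 2 ^ m"
  proof
    fix v assume "v \<in> set xs \<union> set ys"
    then have "v \<le> m"
      unfolding m_def using member_le_sum_list[of v xs] member_le_sum_list[of v ys] by auto
    also have "m < 2 ^ m" by (rule less_exp)
    finally show "v < 2 ^ m" .
  qed
  with assms(3-5) interpret sjf_reduction k l xs ys m
    by unfold_locales
  interpret bounded_transducer fact_step Fact_Start fact_states "m + 2"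
    by (rule bounded_transducer_fact_step)
  show ?thesis
    unfolding poly_reduces_def
    using poly_time_computable_transducer_fun transducer_fun_fact_step_iff by blast
qed

end
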